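(* Let $d,n\ge2$ and let $w\in G(d,d,n)$ be a parabolic Coxeter element. If $w$ consists of a single simultaneous cycle of length $k$ (all other colored integers fixed), then the interval $[\varepsilon,w]$ in $(G(d,d,n),\le_T)$ is isomorphic to $\mathcal{NC}_{G(1,1,k)}$.
   Context: $G(d,d,n)$ is the group of $n\times n$ monomial matrices with $d$-th roots of unity as nonzero entries whose product is $1$, viewed as permutations of colored integers $k^{(s)}$ ($=\zeta^se_k$, $\zeta=e^{2\pi i/d}$, $k\in[n]$, $s\in\mathbb{Z}/d$). The simultaneous cycle $((k_1^{(t_1)}\;\ldots\;k_r^{(t_r)}))$ is the product over $c\in\mathbb{Z}/d$ of the cycles $(k_1^{(t_1+c)}\ldots k_r^{(t_r+c)})$; its length is $r$. $T$ is the set of reflections, $\ell_T$ the absolute length (minimal number of reflection factors), $u\le_Tv$ iff $\ell_T(v)=\ell_T(u)+\ell_T(u^{-1}v)$. A parabolic Coxeter element is an element $w$ with $w\le_T\gamma'$ for some Coxeter element $\gamma'$ (equivalently a Coxeter element of a parabolic subgroup). $\mathcal{NC}_{G(1,1,k)}$ is the noncrossing partition lattice of $G(1,1,k)\cong\mathfrak{S}_k$, i.e. the interval $[\varepsilon,(1\,2\,\ldots\,k)]$ in $\mathfrak{S}_k$ under absolute order (isomorphic to Kreweras' lattice of noncrossing partitions of $[k]$). *)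

theory Defs
  imports Complex_Main "Jordan_Normal_Form.Matrix"
begin

(* Elements of G(d,d,n) are represented as complex n x n monomial matrices,
   acting on column vectors; the coloured integer k^(s) is zeta^s e_k. *)

definition zeta :: "nat \<Rightarrow> complex" where
  "zeta d = cis (2 * pi / real d)"

definition Gdd :: "nat \<Rightarrow> nat \<Rightarrow> complex mat set" where
  "Gdd d n = {M \<in> carrier_mat n n. \<exists>\<pi>. bij_betw \<pi> {..<n} {..<n}
      \<and> (\<forall>i<n. \<forall>j<n. M $$ (i, j) \<noteq> 0 \<longleftrightarrow> i = \<pi> j)
      \<and> (\<forall>j<n. (M $$ (\<pi> j, j)) ^ d = 1)
      \<and> (\<Prod>j<n. M $$ (\<pi> j, j)) = 1}"

definition refls :: "nat \<Rightarrow> nat \<Rightarrow> complex mat set" where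
  "refls d n = {M \<in> Gdd d n. M \<noteq> 1\<^sub>m n \<and>
     (\<exists>a \<in> carrier_vec n. a \<noteq> 0\<^sub>v n \<and>
        (\<forall>v \<in> carrier_vec n. a \<bullet> v = 0 \<longrightarrow> M *\<^sub>v v = v))}"

definition mprod :: "nat \<Rightarrow> complex mat list \<Rightarrow> complex mat" where
  "mprod n rs = foldr (*) rs (1\<^sub>m n)"

definition absl :: "nat \<Rightarrow> nat \<Rightarrow> complex mat \<Rightarrow> nat" where
  "absl d n w = (LEAST m. \<exists>rs. set rs \<subseteq> refls d n \<and> length rs = m \<and> mprod n rs = w)"

definition absle :: "nat \<Rightarrow> nat \<Rightarrow> complex mat \<Rightarrow> complex mat \<Rightarrow> bool" where
  "absle d n u v \<longleftrightarrow> u \<in> Gdd d n \<and> v \<in> Gdd d n \<and>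
     (\<exists>x \<in> Gdd d n. u * x = v \<and> absl d n v = absl d n u + absl d n x)"

text \<open>Coxeter number of G(d,d,n) for d, n >= 2: the largest degree (n-1)d.\<close>
definition coxnum :: "nat \<Rightarrow> nat \<Rightarrow> nat" where
  "coxnum d n = (n - 1) * d"

definition regular :: "nat \<Rightarrow> nat \<Rightarrow> complex \<Rightarrow> complex mat \<Rightarrow> bool" where
  "regular d n z w \<longleftrightarrow> w \<in> Gdd d n \<and>
     (\<exists>v \<in> carrier_vec n. v \<noteq> 0\<^sub>v n \<and> w *\<^sub>v v = z \<cdot>\<^sub>v v \<and>
        (\<forall>r \<in> refls d n. r *\<^sub>v v \<noteq> v))"

text \<open>Coxeter element (Bessis): a e^{2 pi i/h}-regular element.\<close>
definition coxeter :: "nat \<Rightarrow> nat \<Rightarrow> complex mat \<Rightarrow> bool" where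
  "coxeter d n w \<longleftrightarrow> regular d n (cis (2 * pi / real (coxnum d n))) w"

definition parabolic_coxeter :: "nat \<Rightarrow> nat \<Rightarrow> complex mat \<Rightarrow> bool" where
  "parabolic_coxeter d n w \<longleftrightarrow> (\<exists>\<gamma>. coxeter d n \<gamma> \<and> absle d n w \<gamma>)"

text \<open>w is the single simultaneous cycle ((ks!0^(ts!0) ... ks!(k-1)^(ts!(k-1)))),
  all other coloured integers fixed.\<close>
definition single_sim_cycle :: "nat \<Rightarrow> nat \<Rightarrow> complex mat \<Rightarrow> nat \<Rightarrow> bool" where
  "single_sim_cycle d n w k \<longleftrightarrow> w \<in> Gdd d n \<and> k \<ge> 1 \<and>
     (\<exists>ks ts :: nat list. length ks = k \<and> length ts = k \<and> distinct ks \<and> set ks \<subseteq> {..<n} \<and>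
        (\<forall>i<k. w *\<^sub>v (zeta d ^ (ts!i) \<cdot>\<^sub>v unit_vec n (ks!i))
              = zeta d ^ (ts!((i+1) mod k)) \<cdot>\<^sub>v unit_vec n (ks!((i+1) mod k))) \<and>
        (\<forall>j<n. j \<notin> set ks \<longrightarrow> w *\<^sub>v unit_vec n j = unit_vec n j))"

text \<open>The long cycle (1 2 ... k) in G(1,1,k) = S_k as a permutation matrix (0-indexed).\<close>
definition long_cycle :: "nat \<Rightarrow> complex mat" where
  "long_cycle k = mat k k (\<lambda>(i, j). if i = (j + 1) mod k then 1 else 0)"

text \<open>NC_{G(1,1,k)}: the interval [1, (1 2 ... k)] in (G(1,1,k), \<le>_T).\<close>
definition NC_A :: "nat \<Rightarrow> complex mat set" where
  "NC_A k = {u. absle 1 k u (long_cycle k)}"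

definition interval :: "nat \<Rightarrow> nat \<Rightarrow> complex mat \<Rightarrow> complex mat set" where
  "interval d n w = {u. absle d n (1\<^sub>m n) u \<and> absle d n u w}"

end

(*
  Let w = ((k_1^(t_1) ... k_r^(t_r))). Conjugating the permutation matrices of S_k = G(1,1,k)
  by diag(zeta^(t_1), ..., zeta^(t_r)) and placing them on the coordinates k_1, ..., k_r gives an
  injective homomorphism emb from S_k into G(d,d,n) that sends the long cycle to w and
  transpositions to reflections. Reflection length is bounded below by the dimension of the
  moved space im(g - 1); on the image of emb this bound is attained and equals the reflection
  length in S_k, so emb preserves absolute length and the absolute order. Conversely, if
  u x = emb N with additive lengths, the moved spaces of u and x meet trivially, so u and x fix
  every vector that emb N fixes: the coordinates outside the cycle and the vector
  sum_i zeta^(t_i) e_(k_i). A monomial matrix fixing these lies in the image of emb. Hence emb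
  maps [1, (1 2 ... k)] bijectively and order-preservingly onto [1, w].
*)

theory Submission
  imports Defs "HOL-Library.Function_Algebras" "HOL-Combinatorics.Transposition"
begin

section \<open>Moved spaces\<close>

text \<open>Vectors of \<open>\<complex>\<^sup>n\<close> are modelled as functions \<^typ>\<open>nat \<Rightarrow> complex\<close> vanishing from \<open>n\<close> on,
  so that the spaces for all \<open>n\<close> live in a single vector space.\<close>

definition scalef :: "complex \<Rightarrow> (nat \<Rightarrow> complex) \<Rightarrow> nat \<Rightarrow> complex" where
  "scalef c f = (\<lambda>i. c * f i)"

interpretation cfun: vector_space scalef
  by unfold_locales (auto simp: scalef_def func_plus algebra_simps)

definition coord_space :: "nat \<Rightarrow> (nat \<Rightarrow> complex) set" where
  "coord_space n = {f. \<forall>i\<ge>n. f i = 0}"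

definition unit_fun :: "nat \<Rightarrow> nat \<Rightarrow> complex" where
  "unit_fun i = (\<lambda>j. if j = i then 1 else 0)"

lemma sum_fun_apply: "(\<Sum>i\<in>A. f i) x = (\<Sum>i\<in>A. f i x)" for f :: "'i \<Rightarrow> 'a \<Rightarrow> 'b::comm_monoid_add"
  by (induction A rule: infinite_finite_induct) (auto simp: func_plus func_zero)

lemma coord_space_subset_span: "coord_space n \<subseteq> cfun.span (unit_fun ` {..<n})"
proof
  fix f assume f: "f \<in> coord_space n"
  have "f = (\<Sum>i\<in>{..<n}. scalef (f i) (unit_fun i))"
  proof
    fix x show "f x = (\<Sum>i\<in>{..<n}. scalef (f i) (unit_fun i)) x"
    proof (cases "x < n")
      case True
      have "(\<Sum>i\<in>{..<n}. scalef (f i) (unit_fun i)) x = (\<Sum>i\<in>{..<n}. f i * (if x = i then 1 else 0))"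
        by (simp add: sum_fun_apply scalef_def unit_fun_def eq_commute)
      also have "\<dots> = (\<Sum>i\<in>{..<n}. if x = i then f i else 0)"
        by (rule sum.cong) auto
      also have "\<dots> = f x" using True by (simp add: sum.delta')
      finally show ?thesis by simp
    next
      case False
      then show ?thesis using f by (auto simp: sum_fun_apply scalef_def unit_fun_def coord_space_def intro!: sum.neutral)
    qed
  qed
  also have "\<dots> \<in> cfun.span (unit_fun ` {..<n})"
    by (intro cfun.span_sum cfun.span_scale cfun.span_base) auto
  finally show "f \<in> cfun.span (unit_fun ` {..<n})" .
qed

lemma coord_space_basis_extend:
  assumes "A \<subseteq> coord_space n" "S \<subseteq> A" "cfun.independent S"
  obtains B where "S \<subseteq> B" "B \<subseteq> A" "cfun.independent B" "A \<subseteq> cfun.span B" "finite B" "card B = cfun.dim A"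
proof -
  obtain B where B: "S \<subseteq> B" "B \<subseteq> A" "cfun.independent B" "A \<subseteq> cfun.span B"
    by (rule cfun.maximal_independent_subset_extend[OF assms(2,3)])
  have "B \<subseteq> cfun.span (unit_fun ` {..<n})" using B assms coord_space_subset_span by blast
  then have "finite B" using cfun.independent_span_bound[of "unit_fun ` {..<n}" B] B by auto
  moreover have "card B = cfun.dim A" using cfun.basis_card_eq_dim B by blast
  ultimately show ?thesis by (rule that[OF B])
qed

lemma dim_le_of_subset_span_Un:
  assumes "A \<subseteq> coord_space n" "B \<subseteq> coord_space n" "C \<subseteq> cfun.span (A \<union> B)"
  shows "cfun.dim C \<le> cfun.dim A + cfun.dim B"
proof -
  obtain BA where BA: "BA \<subseteq> A" "A \<subseteq> cfun.span BA" "finite BA" "card BA = cfun.dim A"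
    by (rule coord_space_basis_extend[OF assms(1) empty_subsetI cfun.independent_empty]) blast
  obtain BB where BB: "BB \<subseteq> B" "B \<subseteq> cfun.span BB" "finite BB" "card BB = cfun.dim B"
    by (rule coord_space_basis_extend[OF assms(2) empty_subsetI cfun.independent_empty]) blast
  have "A \<union> B \<subseteq> cfun.span (BA \<union> BB)"
    using BA BB cfun.span_mono[of BA "BA \<union> BB"] cfun.span_mono[of BB "BA \<union> BB"] by blast
  then have "cfun.span (A \<union> B) \<subseteq> cfun.span (BA \<union> BB)"
    using cfun.span_minimal cfun.subspace_span by blast
  then have "cfun.dim C \<le> card (BA \<union> BB)"
    using assms(3) BA BB by (intro cfun.dim_le_card) auto
  also have "\<dots> \<le> card BA + card BB" by (rule card_Un_le)
  finally show ?thesis using BA BB by simp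
qed

lemma dim_additive_imp_Int_zero:
  assumes "A \<subseteq> coord_space n" "B \<subseteq> coord_space n" "C \<subseteq> cfun.span (A \<union> B)"
    and "cfun.dim A + cfun.dim B \<le> cfun.dim C" and "y \<in> A" "y \<in> B"
  shows "y = 0"
proof (rule ccontr)
  assume y0: "y \<noteq> 0"
  have ind: "cfun.independent {y}" using y0 by simp
  have sub: "{y} \<subseteq> A" using assms(5) by simp
  obtain BA where BA: "{y} \<subseteq> BA" "BA \<subseteq> A" "A \<subseteq> cfun.span BA" "finite BA" "card BA = cfun.dim A"
    by (rule coord_space_basis_extend[OF assms(1) sub ind]) blast
  obtain BB where BB: "BB \<subseteq> B" "B \<subseteq> cfun.span BB" "finite BB" "card BB = cfun.dim B"
    by (rule coord_space_basis_extend[OF assms(2) empty_subsetI cfun.independent_empty]) blast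
  have yB: "y \<in> cfun.span BB" using BB assms(6) by blast
  have "A \<union> B \<subseteq> cfun.span (BA \<union> BB)"
    using BA BB cfun.span_mono[of BA "BA \<union> BB"] cfun.span_mono[of BB "BA \<union> BB"] by blast
  then have "cfun.span (A \<union> B) \<subseteq> cfun.span (BA \<union> BB)"
    using cfun.span_minimal cfun.subspace_span by blast
  also have "BA \<union> BB = insert y ((BA - {y}) \<union> BB)" using BA by auto
  also have "cfun.span \<dots> = cfun.span ((BA - {y}) \<union> BB)"
    using yB cfun.span_redundant cfun.span_mono[of BB "(BA - {y}) \<union> BB"] by blast
  finally have "cfun.dim C \<le> card ((BA - {y}) \<union> BB)"
    using assms(3) BA BB by (intro cfun.dim_le_card) auto
  also have "\<dots> \<le> card (BA - {y}) + card BB" by (rule card_Un_le)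
  finally have "cfun.dim C \<le> card (BA - {y}) + card BB" .
  moreover have "card (BA - {y}) + 1 = card BA" by (metis card_Suc_Diff1 Suc_eq_plus1 BA(1,4) insert_subset)
  ultimately show False using assms(4) BA BB by linarith
qed

lemma dim_less_of_subspace:
  assumes "B \<subseteq> coord_space n" "A \<subseteq> B" "cfun.subspace A" "y \<in> B" "y \<notin> A"
  shows "cfun.dim A < cfun.dim B"
proof -
  have An: "A \<subseteq> coord_space n" using assms by blast
  obtain BA where BA: "BA \<subseteq> A" "cfun.independent BA" "A \<subseteq> cfun.span BA" "finite BA" "card BA = cfun.dim A"
    by (rule coord_space_basis_extend[OF An empty_subsetI cfun.independent_empty]) blast
  have "cfun.span BA = A" using BA assms(3) cfun.span_subspace by blast
  then have ind: "cfun.independent (insert y BA)"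
    using BA assms(5) cfun.independent_insertI by auto
  have sub: "insert y BA \<subseteq> B" using assms BA by blast
  obtain BB where BB: "insert y BA \<subseteq> BB" "BB \<subseteq> B" "finite BB" "card BB = cfun.dim B"
    by (rule coord_space_basis_extend[OF assms(1) sub ind]) blast
  have "card (insert y BA) \<le> card BB" using BB by (intro card_mono) auto
  moreover have "card (insert y BA) = card BA + 1" using BA assms(5) by (subst card_insert_disjoint) auto
  ultimately show ?thesis using BA BB by simp
qed

definition mat_act :: "nat \<Rightarrow> complex mat \<Rightarrow> (nat \<Rightarrow> complex) \<Rightarrow> nat \<Rightarrow> complex" where
  "mat_act n M f = (\<lambda>i. if i < n then (\<Sum>j<n. M $$ (i, j) * f j) else 0)"

definition mov :: "nat \<Rightarrow> complex mat \<Rightarrow> (nat \<Rightarrow> complex) set" where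
  "mov n M = {mat_act n M f - f | f. f \<in> coord_space n}"

definition mov_dim :: "nat \<Rightarrow> complex mat \<Rightarrow> nat" where
  "mov_dim n M = cfun.dim (mov n M)"

lemma mat_act_coord_space[simp]: "mat_act n M f \<in> coord_space n"
  by (simp add: mat_act_def coord_space_def)

lemma coord_space_diff[simp]: "f \<in> coord_space n \<Longrightarrow> g \<in> coord_space n \<Longrightarrow> f - g \<in> coord_space n"
  by (simp add: coord_space_def)
lemma coord_space_scalef[simp]: "f \<in> coord_space n \<Longrightarrow> scalef c f \<in> coord_space n"
  by (simp add: coord_space_def scalef_def)
lemma coord_space_add[simp]: "f \<in> coord_space n \<Longrightarrow> g \<in> coord_space n \<Longrightarrow> f + g \<in> coord_space n"
  by (simp add: coord_space_def)
lemma coord_space_zero[simp]: "0 \<in> coord_space n"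
  by (simp add: coord_space_def)
lemma unit_fun_coord_space[simp]: "i < n \<Longrightarrow> unit_fun i \<in> coord_space n"
  by (simp add: coord_space_def unit_fun_def)

lemma mat_act_add: "mat_act n M (f + g) = mat_act n M f + mat_act n M g"
  by (auto simp: mat_act_def algebra_simps sum.distrib)
lemma mat_act_scalef: "mat_act n M (scalef c f) = scalef c (mat_act n M f)"
  by (auto simp: mat_act_def scalef_def sum_distrib_left algebra_simps)
lemma mat_act_zero: "mat_act n M 0 = 0"
  by (auto simp: mat_act_def)

lemma mat_mult_entry:
  assumes "A \<in> carrier_mat n n" "B \<in> carrier_mat n n" "i < n" "j < n"
  shows "(A * B) $$ (i, j) = (\<Sum>l<n. A $$ (i, l) * B $$ (l, j))"
  using assms by (simp add: index_mult_mat scalar_prod_def atLeast0LessThan)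

lemma mat_act_mult:
  assumes "A \<in> carrier_mat n n" "B \<in> carrier_mat n n"
  shows "mat_act n (A * B) f = mat_act n A (mat_act n B f)"
proof
  fix i show "mat_act n (A * B) f i = mat_act n A (mat_act n B f) i"
  proof (cases "i < n")
    case True
    have "mat_act n (A * B) f i = (\<Sum>j<n. (A * B) $$ (i, j) * f j)"
      using True by (simp add: mat_act_def del: index_mult_mat)
    also have "\<dots> = (\<Sum>j<n. (\<Sum>l<n. A $$ (i, l) * B $$ (l, j)) * f j)"
      by (rule sum.cong[OF refl], subst mat_mult_entry[OF assms True]) auto
    also have "\<dots> = (\<Sum>j<n. \<Sum>l<n. A $$ (i, l) * (B $$ (l, j) * f j))"
      by (simp add: sum_distrib_right mult.assoc)
    also have "\<dots> = (\<Sum>l<n. \<Sum>j<n. A $$ (i, l) * (B $$ (l, j) * f j))"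
      by (rule sum.swap)
    also have "\<dots> = mat_act n A (mat_act n B f) i"
      using True by (simp add: mat_act_def sum_distrib_left)
    finally show ?thesis .
  qed (simp add: mat_act_def)
qed

lemma mat_act_one: "f \<in> coord_space n \<Longrightarrow> mat_act n (1\<^sub>m n) f = f"
proof
  fix i assume f: "f \<in> coord_space n"
  show "mat_act n (1\<^sub>m n) f i = f i"
  proof (cases "i < n")
    case True
    have "mat_act n (1\<^sub>m n) f i = (\<Sum>j<n. (if i = j then 1 else 0) * f j)"
      using True by (simp add: mat_act_def)
    also have "\<dots> = (\<Sum>j<n. if i = j then f j else 0)"
      by (rule sum.cong) auto
    also have "\<dots> = f i" using True by (simp add: sum.delta)
    finally show ?thesis .
  qed (use f in \<open>simp add: mat_act_def coord_space_def\<close>)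
qed

lemma mov_coord_space: "mov n M \<subseteq> coord_space n"
  by (auto simp: mov_def)

lemma mov_subspace: "cfun.subspace (mov n M)"
  unfolding cfun.subspace_def
proof (intro conjI ballI allI)
  show "0 \<in> mov n M" unfolding mov_def by (rule CollectI, rule exI[of _ 0]) (simp add: mat_act_zero)
next
  fix x y assume "x \<in> mov n M" "y \<in> mov n M"
  then obtain f g where "x = mat_act n M f - f" "f \<in> coord_space n" "y = mat_act n M g - g" "g \<in> coord_space n"
    by (auto simp: mov_def)
  then show "x + y \<in> mov n M" unfolding mov_def
    by (intro CollectI exI[of _ "f + g"]) (simp add: mat_act_add algebra_simps)
next
  fix c x assume "x \<in> mov n M"
  then obtain f where "x = mat_act n M f - f" "f \<in> coord_space n"
    by (auto simp: mov_def)
  moreover have "mat_act n M (scalef c f) - scalef c f = scalef c (mat_act n M f - f)"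
    by (simp only: mat_act_scalef) (simp add: scalef_def fun_eq_iff algebra_simps)
  ultimately have "mat_act n M (scalef c f) - scalef c f = scalef c x" by simp
  then show "scalef c x \<in> mov n M" unfolding mov_def using \<open>f \<in> coord_space n\<close>
    by (intro CollectI exI[of _ "scalef c f"]) auto
qed

lemma mov_mult_subset_span:
  assumes "A \<in> carrier_mat n n" "B \<in> carrier_mat n n"
  shows "mov n (A * B) \<subseteq> cfun.span (mov n A \<union> mov n B)"
proof
  fix x assume "x \<in> mov n (A * B)"
  then obtain f where f: "x = mat_act n (A * B) f - f" "f \<in> coord_space n" by (auto simp: mov_def)
  have "x = (mat_act n A (mat_act n B f) - mat_act n B f) + (mat_act n B f - f)"
    using f assms by (simp add: mat_act_mult)
  moreover have "mat_act n A (mat_act n B f) - mat_act n B f \<in> mov n A" by (auto simp: mov_def)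
  moreover have "mat_act n B f - f \<in> mov n B" using f by (auto simp: mov_def)
  ultimately show "x \<in> cfun.span (mov n A \<union> mov n B)"
    by (metis cfun.span_add cfun.span_base UnI1 UnI2)
qed

lemma mov_dim_mult:
  assumes "A \<in> carrier_mat n n" "B \<in> carrier_mat n n"
  shows "mov_dim n (A * B) \<le> mov_dim n A + mov_dim n B"
  unfolding mov_dim_def by (rule dim_le_of_subset_span_Un[OF mov_coord_space mov_coord_space mov_mult_subset_span[OF assms]])

lemma mov_one: "mov n (1\<^sub>m n) = {0}"
  by (auto simp: mov_def mat_act_one intro!: exI[of _ 0])

lemma mov_dim_one: "mov_dim n (1\<^sub>m n) = 0"
proof -
  have "cfun.dim {0::nat\<Rightarrow>complex} \<le> card ({}::(nat\<Rightarrow>complex) set)"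
    by (rule cfun.dim_le_card) auto
  then show ?thesis by (simp add: mov_dim_def mov_one)
qed

lemma mov_uminus: "y \<in> mov n M \<Longrightarrow> - y \<in> mov n M"
  using mov_subspace cfun.subspace_neg by blast

lemma refls_Gdd: "refls d n \<subseteq> Gdd d n" by (auto simp: refls_def)
lemma Gdd_carrier: "Gdd d n \<subseteq> carrier_mat n n" by (auto simp: Gdd_def)

lemma scalar_prod_vec_sum: "a \<in> carrier_vec n \<Longrightarrow> a \<bullet> vec n f = (\<Sum>i<n. a $ i * f i)"
  by (simp add: scalar_prod_def atLeast0LessThan)

lemma mult_mat_vec_vec_index: "M \<in> carrier_mat n n \<Longrightarrow> i < n \<Longrightarrow> (M *\<^sub>v vec n f) $ i = (\<Sum>j<n. M $$ (i, j) * f j)"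
  by (simp add: scalar_prod_def atLeast0LessThan)

lemma mat_act_fix_if_orthogonal:
  assumes r: "r \<in> carrier_mat n n" and a: "a \<in> carrier_vec n"
    and fx: "\<forall>v\<in>carrier_vec n. a \<bullet> v = 0 \<longrightarrow> r *\<^sub>v v = v"
    and f: "f \<in> coord_space n" and z: "(\<Sum>i<n. a $ i * f i) = 0"
  shows "mat_act n r f = f"
proof
  fix i
  have "r *\<^sub>v vec n f = vec n f" using fx z a by (simp add: scalar_prod_vec_sum)
  then have e: "i < n \<Longrightarrow> (r *\<^sub>v vec n f) $ i = f i" by (metis index_vec)
  show "mat_act n r f i = f i"
  proof (cases "i < n")
    case True
    then have "mat_act n r f i = (r *\<^sub>v vec n f) $ i" using r by (simp only: mult_mat_vec_vec_index mat_act_def if_True)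
    then show ?thesis using e True by simp
  qed (use f in \<open>simp add: mat_act_def coord_space_def\<close>)
qed

lemma mov_dim_refl:
  assumes "r \<in> refls d n"
  shows "mov_dim n r \<le> 1"
proof -
  have r: "r \<in> carrier_mat n n" using assms refls_Gdd Gdd_carrier by blast
  obtain a where a: "a \<in> carrier_vec n" "a \<noteq> 0\<^sub>v n"
    and fx: "\<forall>v\<in>carrier_vec n. a \<bullet> v = 0 \<longrightarrow> r *\<^sub>v v = v"
    using assms by (auto simp: refls_def)
  obtain p where p: "p < n" "a $ p \<noteq> 0" using a by (metis eq_vecI index_zero_vec(1,2) carrier_vecD)
  define q where "q = mat_act n r (unit_fun p) - unit_fun p"
  have "mov n r \<subseteq> cfun.span {q}"
  proof
    fix x assume "x \<in> mov n r"
    then obtain f where f: "x = mat_act n r f - f" "f \<in> coord_space n" by (auto simp: mov_def)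
    define s where "s = (\<Sum>i<n. a $ i * f i) / a $ p"
    define g where "g = f - scalef s (unit_fun p)"
    have gV: "g \<in> coord_space n" using f p by (simp add: g_def)
    have "(\<Sum>i<n. a $ i * g i) = (\<Sum>i<n. a $ i * f i) - (\<Sum>i<n. a $ i * (s * unit_fun p i))"
      by (simp add: g_def scalef_def algebra_simps sum_subtractf)
    also have "(\<Sum>i<n. a $ i * (s * unit_fun p i)) = (\<Sum>i<n. if i = p then a $ p * s else 0)"
      by (rule sum.cong) (auto simp: unit_fun_def)
    also have "\<dots> = a $ p * s" using p by simp
    finally have "(\<Sum>i<n. a $ i * g i) = 0" using p by (simp add: s_def)
    then have "mat_act n r g = g" using mat_act_fix_if_orthogonal[OF r a(1) fx gV] by simp
    have fg: "f = g + scalef s (unit_fun p)" by (simp add: g_def)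
    have "x = mat_act n r (g + scalef s (unit_fun p)) - (g + scalef s (unit_fun p))" using f(1) fg by simp
    also have "\<dots> = (mat_act n r g - g) + (scalef s (mat_act n r (unit_fun p)) - scalef s (unit_fun p))"
      by (simp add: mat_act_add mat_act_scalef algebra_simps)
    finally have "x = (mat_act n r g - g) + (scalef s (mat_act n r (unit_fun p)) - scalef s (unit_fun p))" .
    then have "x = scalef s q"
      using \<open>mat_act n r g = g\<close> by (simp add: q_def scalef_def fun_eq_iff algebra_simps)
    then show "x \<in> cfun.span {q}" by (simp add: cfun.span_scale cfun.span_base)
  qed
  then have "cfun.dim (mov n r) \<le> card {q}" by (intro cfun.dim_le_card) auto
  then show ?thesis by (simp add: mov_dim_def)
qed

lemma mprod_Cons[simp]: "mprod n (r # rs) = r * mprod n rs" by (simp add: mprod_def)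
lemma mprod_Nil[simp]: "mprod n [] = 1\<^sub>m n" by (simp add: mprod_def)

lemma mprod_carrier: "set rs \<subseteq> carrier_mat n n \<Longrightarrow> mprod n rs \<in> carrier_mat n n"
  by (induction rs) auto

lemma mov_dim_mprod: "set rs \<subseteq> refls d n \<Longrightarrow> mov_dim n (mprod n rs) \<le> length rs"
proof (induction rs)
  case Nil then show ?case by (simp add: mov_dim_one)
next
  case (Cons r rs)
  have c: "set rs \<subseteq> carrier_mat n n" "r \<in> carrier_mat n n"
    using Cons.prems refls_Gdd[of d n] Gdd_carrier[of d n] by auto
  have "mov_dim n (mprod n (r # rs)) \<le> mov_dim n r + mov_dim n (mprod n rs)"
    using mov_dim_mult[OF c(2) mprod_carrier[OF c(1)]] by simp
  also have "\<dots> \<le> 1 + length rs" using Cons mov_dim_refl by (meson add_mono list.set_intros(1) set_subset_Cons subset_trans subset_code(1))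
  finally show ?case by simp
qed

definition refl_factorable :: "nat \<Rightarrow> nat \<Rightarrow> complex mat \<Rightarrow> bool" where
  "refl_factorable d n g \<longleftrightarrow> (\<exists>rs. set rs \<subseteq> refls d n \<and> mprod n rs = g)"

lemma absl_mprod_le: "set rs \<subseteq> refls d n \<Longrightarrow> absl d n (mprod n rs) \<le> length rs"
  unfolding absl_def by (rule Least_le) blast

lemma absl_factorization:
  assumes "refl_factorable d n g"
  obtains rs where "set rs \<subseteq> refls d n" "mprod n rs = g" "length rs = absl d n g"
proof -
  have "\<exists>m rs. set rs \<subseteq> refls d n \<and> length rs = m \<and> mprod n rs = g"
    using assms by (auto simp: refl_factorable_def)
  then have "\<exists>rs. set rs \<subseteq> refls d n \<and> length rs = absl d n g \<and> mprod n rs = g"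
    unfolding absl_def by (rule LeastI_ex)
  then show ?thesis using that by blast
qed

lemma mov_dim_le_absl: "refl_factorable d n g \<Longrightarrow> mov_dim n g \<le> absl d n g"
  by (metis absl_factorization mov_dim_mprod)

lemma absl_one: "absl d n (1\<^sub>m n) = 0"
  using absl_mprod_le[of "[]" d n] by simp

section \<open>Monomial matrices and reflections\<close>

definition monomial_mat :: "nat \<Rightarrow> (nat \<Rightarrow> nat) \<Rightarrow> (nat \<Rightarrow> complex) \<Rightarrow> complex mat" where
  "monomial_mat n \<pi> c = mat n n (\<lambda>(a, b). if a = \<pi> b then c b else 0)"

definition refl_coeff :: "nat \<Rightarrow> nat \<Rightarrow> complex \<Rightarrow> nat \<Rightarrow> complex" where
  "refl_coeff i j c b = (if b = i then c else if b = j then inverse c else 1)"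

definition refl_mat :: "nat \<Rightarrow> nat \<Rightarrow> nat \<Rightarrow> complex \<Rightarrow> complex mat" where
  "refl_mat n i j c = monomial_mat n (Transposition.transpose i j) (refl_coeff i j c)"

lemma monomial_mat_carrier[simp]: "monomial_mat n \<pi> c \<in> carrier_mat n n"
  by (simp add: monomial_mat_def)
lemma monomial_mat_dims[simp]: "dim_row (monomial_mat n \<pi> c) = n" "dim_col (monomial_mat n \<pi> c) = n"
  by (simp_all add: monomial_mat_def)
lemma monomial_mat_index: "a < n \<Longrightarrow> b < n \<Longrightarrow> monomial_mat n \<pi> c $$ (a, b) = (if a = \<pi> b then c b else 0)"
  by (simp add: monomial_mat_def)

lemma monomial_mat_mult:
  assumes "\<forall>j<n. \<sigma> j < n"
  shows "monomial_mat n \<pi> c * monomial_mat n \<sigma> e = monomial_mat n (\<pi> \<circ> \<sigma>) (\<lambda>j. c (\<sigma> j) * e j)"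
proof (rule eq_matI)
  fix a b assume ab: "a < dim_row (monomial_mat n (\<pi> \<circ> \<sigma>) (\<lambda>j. c (\<sigma> j) * e j))"
    "b < dim_col (monomial_mat n (\<pi> \<circ> \<sigma>) (\<lambda>j. c (\<sigma> j) * e j))"
  then have ab': "a < n" "b < n" by auto
  have "(monomial_mat n \<pi> c * monomial_mat n \<sigma> e) $$ (a, b)
      = (\<Sum>l<n. (if a = \<pi> l then c l else 0) * (if l = \<sigma> b then e b else 0))"
    unfolding mat_mult_entry[OF monomial_mat_carrier monomial_mat_carrier ab'] by (intro sum.cong) (use ab' in \<open>auto simp: monomial_mat_index\<close>)
  also have "\<dots> = (\<Sum>l<n. if l = \<sigma> b then (if a = \<pi> l then c l * e b else 0) else 0)"
    by (rule sum.cong) auto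
  also have "\<dots> = (if a = \<pi> (\<sigma> b) then c (\<sigma> b) * e b else 0)"
    using assms ab' by (simp add: sum.delta')
  finally show "(monomial_mat n \<pi> c * monomial_mat n \<sigma> e) $$ (a, b) = monomial_mat n (\<pi> \<circ> \<sigma>) (\<lambda>j. c (\<sigma> j) * e j) $$ (a, b)"
    using ab' by (simp add: monomial_mat_index)
qed auto

lemma Gdd_monomial:
  assumes "M \<in> Gdd d n"
  obtains \<pi> c where "bij_betw \<pi> {..<n} {..<n}" "M = monomial_mat n \<pi> c"
    "\<forall>j<n. c j \<noteq> 0 \<and> c j ^ d = 1" "(\<Prod>j<n. c j) = 1"
proof -
  obtain \<pi> where M: "M \<in> carrier_mat n n" "bij_betw \<pi> {..<n} {..<n}"
    "\<forall>i<n. \<forall>j<n. M $$ (i, j) \<noteq> 0 \<longleftrightarrow> i = \<pi> j"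
    "\<forall>j<n. (M $$ (\<pi> j, j)) ^ d = 1" "(\<Prod>j<n. M $$ (\<pi> j, j)) = 1"
    using assms by (auto simp: Gdd_def)
  define c where "c j = M $$ (\<pi> j, j)" for j
  have pj: "j < n \<Longrightarrow> \<pi> j < n" for j using M(2) by (auto simp: bij_betw_def)
  have "M = monomial_mat n \<pi> c"
  proof (rule eq_matI)
    fix i j assume "i < dim_row (monomial_mat n \<pi> c)" "j < dim_col (monomial_mat n \<pi> c)"
    then have ij: "i < n" "j < n" by auto
    show "M $$ (i, j) = monomial_mat n \<pi> c $$ (i, j)"
      using M(3) ij by (auto simp: monomial_mat_index c_def)
  qed (use M in auto)
  moreover have "\<forall>j<n. c j \<noteq> 0 \<and> c j ^ d = 1" using M(3,4) pj by (auto simp: c_def)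
  moreover have "(\<Prod>j<n. c j) = 1" using M(5) by (simp add: c_def)
  ultimately show ?thesis using that M(2) by blast
qed

lemma monomial_mat_Gdd:
  assumes "bij_betw \<pi> {..<n} {..<n}" "\<forall>j<n. c j \<noteq> 0 \<and> c j ^ d = 1" "(\<Prod>j<n. c j) = 1"
  shows "monomial_mat n \<pi> c \<in> Gdd d n"
proof -
  have pj: "j < n \<Longrightarrow> \<pi> j < n" for j using assms(1) by (auto simp: bij_betw_def)
  show ?thesis unfolding Gdd_def
    by (rule CollectI, rule conjI, simp, rule exI[of _ \<pi>]) (use assms pj in \<open>auto simp: monomial_mat_index\<close>)
qed

lemma bij_betw_lessThan_less: "bij_betw \<pi> {..<n} {..<n} \<Longrightarrow> j < n \<Longrightarrow> \<pi> j < n"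
  by (auto simp: bij_betw_def)

lemma Gdd_mult:
  assumes "A \<in> Gdd d n" "B \<in> Gdd d n"
  shows "A * B \<in> Gdd d n"
proof -
  obtain \<pi> c where A: "bij_betw \<pi> {..<n} {..<n}" "A = monomial_mat n \<pi> c"
    "\<forall>j<n. c j \<noteq> 0 \<and> c j ^ d = 1" "(\<Prod>j<n. c j) = 1"
    using Gdd_monomial[OF assms(1)] by blast
  obtain \<sigma> e where B: "bij_betw \<sigma> {..<n} {..<n}" "B = monomial_mat n \<sigma> e"
    "\<forall>j<n. e j \<noteq> 0 \<and> e j ^ d = 1" "(\<Prod>j<n. e j) = 1"
    using Gdd_monomial[OF assms(2)] by blast
  have AB: "A * B = monomial_mat n (\<pi> \<circ> \<sigma>) (\<lambda>j. c (\<sigma> j) * e j)"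
    using A(2) B(2) monomial_mat_mult bij_betw_lessThan_less[OF B(1)] by blast
  have p: "(\<Prod>j<n. c (\<sigma> j)) = (\<Prod>j<n. c j)"
    using prod.reindex_bij_betw[OF B(1)] by blast
  show ?thesis unfolding AB
  proof (rule monomial_mat_Gdd)
    show "bij_betw (\<pi> \<circ> \<sigma>) {..<n} {..<n}" using A(1) B(1) bij_betw_trans by blast
    show "\<forall>j<n. c (\<sigma> j) * e j \<noteq> 0 \<and> (c (\<sigma> j) * e j) ^ d = 1"
      using A(3) B(3) bij_betw_lessThan_less[OF B(1)] by (simp add: power_mult_distrib)
    show "(\<Prod>j<n. c (\<sigma> j) * e j) = 1" using A(4) B(4) p by (simp add: prod.distrib)
  qed
qed

lemma one_mat_monomial: "1\<^sub>m n = monomial_mat n id (\<lambda>_. 1)"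
  by (rule eq_matI) (auto simp: monomial_mat_index)

lemma Gdd_one: "1\<^sub>m n \<in> Gdd d n"
  unfolding one_mat_monomial by (rule monomial_mat_Gdd) auto

lemma mat_act_monomial_unit:
  assumes "j < n" "\<pi> j < n"
  shows "mat_act n (monomial_mat n \<pi> c) (unit_fun j) = scalef (c j) (unit_fun (\<pi> j))"
proof
  fix a show "mat_act n (monomial_mat n \<pi> c) (unit_fun j) a = scalef (c j) (unit_fun (\<pi> j)) a"
  proof (cases "a < n")
    case True
    have "mat_act n (monomial_mat n \<pi> c) (unit_fun j) a = (\<Sum>l<n. (if a = \<pi> l then c l else 0) * unit_fun j l)"
      using True by (simp add: mat_act_def monomial_mat_index)
    also have "\<dots> = (\<Sum>l<n. if l = j then (if a = \<pi> l then c l else 0) else 0)"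
      by (rule sum.cong) (auto simp: unit_fun_def)
    also have "\<dots> = (if a = \<pi> j then c j else 0)" using assms by (simp add: sum.delta')
    finally show ?thesis by (simp add: scalef_def unit_fun_def)
  qed (use assms in \<open>auto simp: mat_act_def scalef_def unit_fun_def\<close>)
qed

lemma mat_act_monomial_at:
  assumes "bij_betw \<pi> {..<n} {..<n}" "b < n"
  shows "mat_act n (monomial_mat n \<pi> c) F (\<pi> b) = c b * F b"
proof -
  have pb: "\<pi> b < n" using bij_betw_lessThan_less assms by blast
  have inj: "l < n \<Longrightarrow> \<pi> b = \<pi> l \<longleftrightarrow> l = b" for l
    using assms by (auto simp: bij_betw_def inj_on_def)
  have "mat_act n (monomial_mat n \<pi> c) F (\<pi> b) = (\<Sum>l<n. (if \<pi> b = \<pi> l then c l else 0) * F l)"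
    using pb by (simp add: mat_act_def monomial_mat_index)
  also have "\<dots> = (\<Sum>l<n. if l = b then c l * F l else 0)"
    by (rule sum.cong) (use inj in auto)
  finally show ?thesis using assms by simp
qed

lemma scalef_unit_fun_eq: "scalef c (unit_fun p) = unit_fun q \<longleftrightarrow> c = 1 \<and> p = q"
proof
  assume h: "scalef c (unit_fun p) = unit_fun q"
  then have "scalef c (unit_fun p) q = unit_fun q q" by simp
  then have "c * (if q = p then 1 else 0) = 1" by (simp add: scalef_def unit_fun_def)
  then show "c = 1 \<and> p = q" by (auto split: if_splits)
qed (simp add: scalef_def fun_eq_iff)

lemma scalef_scalef: "scalef a (scalef b f) = scalef (a * b) f" by (simp add: scalef_def fun_eq_iff)

lemma transpose_less: "i < n \<Longrightarrow> j < n \<Longrightarrow> b < n \<Longrightarrow> Transposition.transpose i j b < n" by (simp add: transpose_def)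

lemma bij_betw_transpose_lessThan: "i < n \<Longrightarrow> j < n \<Longrightarrow> bij_betw (Transposition.transpose i j) {..<n} {..<n}"
  by simp

lemma refl_coeff_simps[simp]: "i \<noteq> j \<Longrightarrow> refl_coeff i j c i = c" "i \<noteq> j \<Longrightarrow> refl_coeff i j c j = inverse c"
  "b \<noteq> i \<Longrightarrow> b \<noteq> j \<Longrightarrow> refl_coeff i j c b = 1"
  by (auto simp: refl_coeff_def)

lemma prod_split_two:
  fixes f :: "nat \<Rightarrow> 'a :: comm_monoid_mult"
  assumes "i < n" "j < n" "i \<noteq> j"
  shows "(\<Prod>b<n. f b) = f i * f j * (\<Prod>b\<in>{..<n} - {i, j}. f b)"
proof -
  have e: "{..<n} = insert i (insert j ({..<n} - {i, j}))" using assms by auto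
  have "(\<Prod>b<n. f b) = prod f (insert i (insert j ({..<n} - {i, j})))"
    using arg_cong[of _ _ "prod f", OF e] .
  also have "\<dots> = f i * (f j * prod f ({..<n} - {i, j}))"
    using assms by (simp add: prod.insert)
  finally show ?thesis by (simp add: mult.assoc)
qed

lemma sum_split_two:
  fixes f :: "nat \<Rightarrow> 'a :: comm_monoid_add"
  assumes "i < n" "j < n" "i \<noteq> j"
  shows "(\<Sum>b<n. f b) = f i + f j + (\<Sum>b\<in>{..<n} - {i, j}. f b)"
proof -
  have e: "{..<n} = insert i (insert j ({..<n} - {i, j}))" using assms by auto
  have "(\<Sum>b<n. f b) = sum f (insert i (insert j ({..<n} - {i, j})))"
    using arg_cong[of _ _ "sum f", OF e] .
  also have "\<dots> = f i + (f j + sum f ({..<n} - {i, j}))"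
    using assms by (simp add: sum.insert)
  finally show ?thesis by (simp add: add.assoc)
qed

lemma refl_mat_Gdd:
  assumes "i < n" "j < n" "i \<noteq> j" "c ^ d = 1" "d \<ge> 1"
  shows "refl_mat n i j c \<in> Gdd d n"
  unfolding refl_mat_def
proof (rule monomial_mat_Gdd)
  have c0: "c \<noteq> 0" using assms(4,5) by (metis one_neq_zero power_0_left not_one_le_zero le_0_eq)
  show "bij_betw (Transposition.transpose i j) {..<n} {..<n}" using bij_betw_transpose_lessThan assms by blast
  show "\<forall>b<n. refl_coeff i j c b \<noteq> 0 \<and> refl_coeff i j c b ^ d = 1"
    using c0 assms by (auto simp: refl_coeff_def power_inverse)
  have "(\<Prod>b<n. refl_coeff i j c b) = refl_coeff i j c i * refl_coeff i j c j * (\<Prod>b\<in>{..<n} - {i, j}. refl_coeff i j c b)"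
    by (rule prod_split_two[OF assms(1-3)])
  also have "(\<Prod>b\<in>{..<n} - {i, j}. refl_coeff i j c b) = 1" by (rule prod.neutral) auto
  finally show "(\<Prod>b<n. refl_coeff i j c b) = 1" using c0 assms(3) by simp
qed

lemma monomial_mat_mult_vec_index:
  assumes "bij_betw \<pi> {..<n} {..<n}" "v \<in> carrier_vec n" "j < n"
  shows "(monomial_mat n \<pi> c *\<^sub>v v) $ (\<pi> j) = c j * v $ j"
proof -
  have pj: "\<pi> j < n" using bij_betw_lessThan_less assms by blast
  have inj: "l < n \<Longrightarrow> \<pi> j = \<pi> l \<longleftrightarrow> l = j" for l
    using assms(1,3) by (auto simp: bij_betw_def inj_on_def)
  have "(monomial_mat n \<pi> c *\<^sub>v v) $ (\<pi> j) = (\<Sum>l<n. monomial_mat n \<pi> c $$ (\<pi> j, l) * v $ l)"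
    using pj assms(2) by (simp add: scalar_prod_def atLeast0LessThan)
  also have "\<dots> = (\<Sum>l<n. if l = j then c l * v $ l else 0)"
    using pj inj by (intro sum.cong) (auto simp: monomial_mat_index)
  also have "\<dots> = c j * v $ j" using assms by simp
  finally show ?thesis .
qed

lemma refl_mat_mult_vec_fixed:
  assumes ij: "i < n" "j < n" "i \<noteq> j" and c: "c \<noteq> 0"
    and v: "v \<in> carrier_vec n" "c * v $ i = v $ j"
  shows "refl_mat n i j c *\<^sub>v v = v"
proof (rule eq_vecI)
  fix l assume "l < dim_vec v"
  then have l: "l < n" using v by simp
  have "(refl_mat n i j c *\<^sub>v v) $ (Transposition.transpose i j (Transposition.transpose i j l))
      = refl_coeff i j c (Transposition.transpose i j l) * v $ (Transposition.transpose i j l)"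
    unfolding refl_mat_def
    by (rule monomial_mat_mult_vec_index[OF bij_betw_transpose_lessThan[OF ij(1,2)] v(1) transpose_less[OF ij(1,2) l]])
  then show "(refl_mat n i j c *\<^sub>v v) $ l = v $ l"
    using ij c by (cases "l = i"; cases "l = j") (auto simp: v(2)[symmetric] mult.assoc[symmetric])
qed (use v in \<open>simp add: refl_mat_def\<close>)

lemma refl_mat_refls:
  assumes ij: "i < n" "j < n" "i \<noteq> j" and c: "c ^ d = 1" "d \<ge> 1"
  shows "refl_mat n i j c \<in> refls d n"
proof -
  have c0: "c \<noteq> 0" using c by (metis one_neq_zero power_0_left not_one_le_zero le_0_eq)
  have "refl_mat n i j c $$ (i, i) \<noteq> 1\<^sub>m n $$ (i, i)"
    using ij by (simp add: refl_mat_def monomial_mat_index transpose_def)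
  then have ne: "refl_mat n i j c \<noteq> 1\<^sub>m n" by metis
  define a where "a = vec n (\<lambda>l. if l = i then c else if l = j then -1 else (0::complex))"
  have a0: "a \<noteq> 0\<^sub>v n"
  proof
    assume "a = 0\<^sub>v n"
    then have "a $ j = 0\<^sub>v n $ j" by simp
    then show False using ij by (simp add: a_def)
  qed
  have "refl_mat n i j c *\<^sub>v v = v" if v: "v \<in> carrier_vec n" "a \<bullet> v = 0" for v
  proof -
    have "a \<bullet> v = (\<Sum>l<n. a $ l * v $ l)" using v by (simp add: scalar_prod_def atLeast0LessThan)
    also have "\<dots> = a $ i * v $ i + a $ j * v $ j + (\<Sum>l\<in>{..<n} - {i, j}. a $ l * v $ l)"
      by (rule sum_split_two[OF ij])
    also have "(\<Sum>l\<in>{..<n} - {i, j}. a $ l * v $ l) = 0" by (rule sum.neutral) (auto simp: a_def)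
    finally have "c * v $ i = v $ j" using v ij by (simp add: a_def)
    then show ?thesis by (rule refl_mat_mult_vec_fixed[OF ij c0 v(1)])
  qed
  then show ?thesis unfolding refls_def using refl_mat_Gdd[OF ij c] ne a0 by (auto simp: a_def)
qed

lemma monomial_mat_cong:
  assumes "\<forall>b<n. \<pi> b = \<pi>' b \<and> c b = c' b"
  shows "monomial_mat n \<pi> c = monomial_mat n \<pi>' c'"
  by (rule eq_matI) (use assms in \<open>auto simp: monomial_mat_index\<close>)

lemma refl_mat_involution:
  assumes "i < n" "j < n" "i \<noteq> j" "c \<noteq> 0"
  shows "refl_mat n i j c * refl_mat n i j c = 1\<^sub>m n"
proof -
  have "refl_mat n i j c * refl_mat n i j c = monomial_mat n (Transposition.transpose i j \<circ> Transposition.transpose i j) (\<lambda>b. refl_coeff i j c (Transposition.transpose i j b) * refl_coeff i j c b)"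
    unfolding refl_mat_def by (rule monomial_mat_mult) (use assms in \<open>auto simp: transpose_less\<close>)
  also have "\<dots> = monomial_mat n id (\<lambda>_. 1)"
  proof (rule monomial_mat_cong, intro allI impI conjI)
    fix b assume "b < n"
    show "(Transposition.transpose i j \<circ> Transposition.transpose i j) b = id b" by simp
    show "refl_coeff i j c (Transposition.transpose i j b) * refl_coeff i j c b = 1"
      using assms by (cases "b = i"; cases "b = j") auto
  qed
  finally show ?thesis by (simp add: one_mat_monomial)
qed

lemma mat_act_refl_mat_unit:
  assumes "i < n" "j < n" "b < n"
  shows "mat_act n (refl_mat n i j c) (unit_fun b) = scalef (refl_coeff i j c b) (unit_fun (Transposition.transpose i j b))"
  unfolding refl_mat_def by (rule mat_act_monomial_unit) (use assms in \<open>auto simp: transpose_less\<close>)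

lemma mat_act_refl_mat:
  assumes "p < n" "q < n" "p \<noteq> q"
  shows "mat_act n (refl_mat n p q c) F a = (if a = q then c * F p else if a = p then inverse c * F q
                                     else if a < n then F a else 0)"
proof -
  have b: "bij_betw (Transposition.transpose p q) {..<n} {..<n}" using bij_betw_transpose_lessThan assms by blast
  consider "a = q" | "a = p" | "a \<noteq> p \<and> a \<noteq> q \<and> a < n" | "a \<ge> n" by linarith
  then show ?thesis
  proof cases
    case 1
    then show ?thesis using mat_act_monomial_at[OF b assms(1), of "refl_coeff p q c" F] assms by (simp add: refl_mat_def)
  next
    case 2
    then show ?thesis using mat_act_monomial_at[OF b assms(2), of "refl_coeff p q c" F] assms by (simp add: refl_mat_def)
  next
    case 3
    then have "Transposition.transpose p q a = a" by simp
    then show ?thesis using mat_act_monomial_at[OF b, of a "refl_coeff p q c" F] 3 by (simp add: refl_mat_def)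
  next
    case 4
    then show ?thesis using assms by (simp add: mat_act_def)
  qed
qed

lemma mov_refl_mat_mult_subset:
  assumes g: "g \<in> carrier_mat n n" and pq: "p < n" "q < n" "p \<noteq> q" and c: "c \<noteq> 0"
    and gp: "mat_act n g (unit_fun p) = scalef c (unit_fun q)"
  shows "mov n (refl_mat n p q c * g) \<subseteq> mov n g"
proof
  define y0 where "y0 = mat_act n g (unit_fun p) - unit_fun p"
  have y0: "y0 \<in> mov n g" unfolding y0_def mov_def using pq by auto
  fix x assume "x \<in> mov n (refl_mat n p q c * g)"
  then obtain f where f: "x = mat_act n (refl_mat n p q c * g) f - f" "f \<in> coord_space n"
    by (auto simp: mov_def)
  define F where "F = mat_act n g f"
  have F: "F \<in> coord_space n" by (simp add: F_def)
  have x: "x = (mat_act n (refl_mat n p q c) F - F) + (F - f)"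
    using f mat_act_mult[OF _ g, of "refl_mat n p q c"] by (simp add: F_def refl_mat_def)
  have "mat_act n (refl_mat n p q c) F - F = scalef (F p - F q / c) y0"
  proof
    fix a
    show "(mat_act n (refl_mat n p q c) F - F) a = scalef (F p - F q / c) y0 a"
      using pq c F unfolding y0_def gp mat_act_refl_mat[OF pq]
      by (cases "a = q"; cases "a = p") (auto simp: scalef_def unit_fun_def field_simps coord_space_def)
  qed
  moreover have "scalef (F p - F q / c) y0 \<in> mov n g" using y0 mov_subspace cfun.subspace_scale by blast
  moreover have "F - f \<in> mov n g" using f unfolding mov_def F_def by blast
  ultimately show "x \<in> mov n g" using x mov_subspace cfun.subspace_add by metis
qed

lemma mov_vanishes_at_fixed_coord:
  assumes "\<And>f. mat_act n A f p = f p" "y \<in> mov n A"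
  shows "y p = 0"
  using assms by (auto simp: mov_def)

lemma refl_mat_mult_perm_row:
  assumes \<sigma>: "bij_betw \<sigma> {..<k} {..<k}" and i: "i < k" "\<sigma> i \<noteq> i" and l: "l < k"
  shows "(refl_mat k i (\<sigma> i) 1 * monomial_mat k \<sigma> (\<lambda>_. 1)) $$ (i, l) = (if l = i then 1 else 0)"
proof -
  define j where "j = \<sigma> i"
  have j: "j < k" "i \<noteq> j" using i bij_betw_lessThan_less[OF \<sigma>] by (auto simp: j_def)
  have prod: "refl_mat k i j 1 * monomial_mat k \<sigma> (\<lambda>_. 1)
      = monomial_mat k (Transposition.transpose i j \<circ> \<sigma>) (\<lambda>l. refl_coeff i j 1 (\<sigma> l) * 1)"
    unfolding refl_mat_def by (rule monomial_mat_mult) (use bij_betw_lessThan_less[OF \<sigma>] in blast)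
  have "\<sigma> l = j \<longleftrightarrow> l = i"
    unfolding j_def using inj_on_eq_iff[OF bij_betw_imp_inj_on[OF \<sigma>]] l i(1) by blast
  then have "i = Transposition.transpose i j (\<sigma> l) \<longleftrightarrow> l = i"
    using i(2) by (auto simp: transpose_def j_def)
  then show ?thesis using i j l by (simp add: prod monomial_mat_index j_def[symmetric])
qed

lemma mprod_Gdd: "set rs \<subseteq> Gdd d n \<Longrightarrow> mprod n rs \<in> Gdd d n"
  by (induction rs) (auto simp: Gdd_one intro: Gdd_mult)

lemma Gdd_1_row_sum:
  assumes "M \<in> Gdd 1 k" "a < k"
  shows "(\<Sum>j<k. M $$ (a, j)) = 1"
proof -
  obtain \<sigma> e where M: "bij_betw \<sigma> {..<k} {..<k}" "M = monomial_mat k \<sigma> e"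
    "\<forall>j<k. e j \<noteq> 0 \<and> e j ^ 1 = 1"
    by (rule Gdd_monomial[OF assms(1)]) blast
  define j0 where "j0 = inv_into {..<k} \<sigma> a"
  have aim: "a \<in> \<sigma> ` {..<k}" using M(1) assms(2) by (auto simp: bij_betw_def)
  have j0: "j0 < k" "\<sigma> j0 = a" using inv_into_into[OF aim] f_inv_into_f[OF aim]
    by (auto simp: j0_def)
  have eq: "j < k \<Longrightarrow> a = \<sigma> j \<longleftrightarrow> j = j0" for j
    using M(1) j0 by (auto simp: bij_betw_def inj_on_def)
  have "(\<Sum>j<k. M $$ (a, j)) = (\<Sum>j<k. if j = j0 then 1 else 0)"
    by (rule sum.cong) (use assms(2) M(3) eq in \<open>auto simp: M(2) monomial_mat_index\<close>)
  also have "\<dots> = 1" using j0 by simp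
  finally show ?thesis .
qed

section \<open>Generation by reflections\<close>

definition transp_refls :: "nat \<Rightarrow> nat \<Rightarrow> complex mat set" where
  "transp_refls d n = {refl_mat n i j c | i j c. i < n \<and> j < n \<and> i \<noteq> j \<and> c ^ d = 1}"

lemma transp_refls_refls: "d \<ge> 1 \<Longrightarrow> transp_refls d n \<subseteq> refls d n"
  by (auto simp: transp_refls_def intro: refl_mat_refls)

lemma transp_refls_carrier: "transp_refls d n \<subseteq> carrier_mat n n"
  by (auto simp: transp_refls_def refl_mat_def)

definition moved_coords :: "nat \<Rightarrow> complex mat \<Rightarrow> nat set" where
  "moved_coords n g = {b. b < n \<and> mat_act n g (unit_fun b) \<noteq> unit_fun b}"

lemma involution_cancel:
  fixes r g :: "complex mat"
  assumes "r \<in> carrier_mat n n" "r * r = 1\<^sub>m n" "g \<in> carrier_mat n n"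
  shows "r * (r * g) = g"
proof -
  have "r * (r * g) = (r * r) * g" by (rule assoc_mult_mat[symmetric]) (use assms in auto)
  then show ?thesis using assms left_mult_one_mat[of g n n] by simp
qed

lemma mprod_append:
  assumes "set xs \<subseteq> carrier_mat n n" "set ys \<subseteq> carrier_mat n n"
  shows "mprod n (xs @ ys) = mprod n xs * mprod n ys"
  using assms(1)
proof (induction xs)
  case Nil
  show ?case using mprod_carrier[OF assms(2)] by simp
next
  case (Cons r xs)
  then show ?case
    using assoc_mult_mat[of r n n "mprod n xs" n "mprod n ys" n] mprod_carrier assms(2) by simp
qed

lemma moved_coords_mult:
  assumes "A \<in> carrier_mat n n" "B \<in> carrier_mat n n"
  shows "moved_coords n (A * B) \<subseteq> moved_coords n A \<union> moved_coords n B"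
  using mat_act_mult[OF assms] by (auto simp: moved_coords_def)

lemma moved_coords_refl_mat:
  assumes "i < n" "j < n"
  shows "moved_coords n (refl_mat n i j c) \<subseteq> {i, j}"
  using assms by (auto simp: moved_coords_def mat_act_refl_mat_unit)

lemma moved_coords_monomial:
  assumes "bij_betw \<pi> {..<n} {..<n}" "b < n"
  shows "b \<in> moved_coords n (monomial_mat n \<pi> c) \<longleftrightarrow> \<pi> b \<noteq> b \<or> c b \<noteq> 1"
  using assms scalef_unit_fun_eq[of "c b" "\<pi> b" b]
  by (auto simp: moved_coords_def mat_act_monomial_unit bij_betw_lessThan_less)

lemma moved_coords_reduce_perm:
  assumes "d \<ge> 1" "g \<in> Gdd d n" and \<pi>: "bij_betw \<pi> {..<n} {..<n}"
    and g: "g = monomial_mat n \<pi> c" "\<forall>j<n. c j \<noteq> 0 \<and> c j ^ d = 1"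
    and j: "j < n" "\<pi> j \<noteq> j"
  obtains r where "r \<in> transp_refls d n" "r * g \<in> Gdd d n"
    "moved_coords n (r * g) \<subset> moved_coords n g" "g = r * (r * g)"
proof -
  define i where "i = \<pi> j"
  have i: "i < n" "i \<noteq> j" using j bij_betw_lessThan_less[OF \<pi>] by (auto simp: i_def)
  have cj: "c j \<noteq> 0" "inverse (c j) ^ d = 1" using g(2) j by (auto simp: power_inverse)
  define r where "r = refl_mat n i j (inverse (c j))"
  have r: "r \<in> transp_refls d n" unfolding r_def transp_refls_def using i j cj by blast
  have rc: "r \<in> carrier_mat n n" and gc: "g \<in> carrier_mat n n"
    using r transp_refls_carrier g by auto
  have ij_moved: "i \<in> moved_coords n g" "j \<in> moved_coords n g"
  proof -
    have "\<pi> i \<noteq> i" using i j \<pi> by (auto simp: i_def bij_betw_def inj_on_def)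
    then show "i \<in> moved_coords n g" "j \<in> moved_coords n g"
      using moved_coords_monomial[OF \<pi>] i j g(1) by auto
  qed
  have "mat_act n (r * g) (unit_fun j) = unit_fun j"
    using i j cj \<pi> by (simp add: r_def g(1) mat_act_mult[OF rc gc, unfolded r_def g(1)]
        mat_act_monomial_unit bij_betw_lessThan_less i_def[symmetric] mat_act_scalef
        mat_act_refl_mat_unit scalef_scalef)
  then have "j \<notin> moved_coords n (r * g)" by (simp add: moved_coords_def)
  moreover have "moved_coords n (r * g) \<subseteq> moved_coords n g"
    using moved_coords_mult[OF rc gc] moved_coords_refl_mat[OF i(1) j(1)] ij_moved
    by (auto simp: r_def)
  ultimately have "moved_coords n (r * g) \<subset> moved_coords n g" using ij_moved by blast
  moreover have "r * g \<in> Gdd d n"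
    using Gdd_mult transp_refls_refls[OF assms(1)] refls_Gdd r assms(2) by blast
  moreover have "g = r * (r * g)"
    using involution_cancel[OF rc _ gc] refl_mat_involution i j cj by (simp add: r_def)
  ultimately show ?thesis using that r by blast
qed

lemma moved_coords_reduce_diag:
  assumes "d \<ge> 1" "g \<in> Gdd d n"
    and g: "g = monomial_mat n id c" "\<forall>j<n. c j \<noteq> 0 \<and> c j ^ d = 1" "(\<Prod>j<n. c j) = 1"
    and j: "j < n" "c j \<noteq> 1"
  obtains r1 r2 where "r1 \<in> transp_refls d n" "r2 \<in> transp_refls d n" "r2 * (r1 * g) \<in> Gdd d n"
    "moved_coords n (r2 * (r1 * g)) \<subset> moved_coords n g" "g = r1 * (r2 * (r2 * (r1 * g)))"
proof -
  obtain l where l: "l < n" "l \<noteq> j" "c l \<noteq> 1"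
  proof (rule ccontr)
    assume "\<not> thesis"
    then have "\<forall>l\<in>{..<n} - {j}. c l = 1" using that by blast
    then have "(\<Prod>b<n. c b) = c j" using j prod.remove[of "{..<n}" j c] by simp
    then show False using g(3) j by simp
  qed
  have cj: "c j \<noteq> 0" "inverse (c j) ^ d = 1" using g(2) j by (auto simp: power_inverse)
  define r1 where "r1 = refl_mat n j l 1"
  define r2 where "r2 = refl_mat n l j (inverse (c j))"
  have r: "r1 \<in> transp_refls d n" "r2 \<in> transp_refls d n"
    unfolding r1_def r2_def transp_refls_def using j l cj by force+
  have rc: "r1 \<in> carrier_mat n n" "r2 \<in> carrier_mat n n" and gc: "g \<in> carrier_mat n n"
    using r transp_refls_carrier g by auto
  have r1gc: "r1 * g \<in> carrier_mat n n" using rc gc by simp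
  have jl_moved: "j \<in> moved_coords n g" "l \<in> moved_coords n g"
    using moved_coords_monomial[of id n] j l g(1) by auto
  have "mat_act n g (unit_fun j) = scalef (c j) (unit_fun j)"
    using j by (simp add: g(1) mat_act_monomial_unit)
  moreover have "mat_act n r1 (unit_fun j) = unit_fun l"
    using j l by (simp add: r1_def mat_act_refl_mat_unit)
  moreover have "mat_act n r2 (unit_fun l) = scalef (inverse (c j)) (unit_fun j)"
    using j l by (simp add: r2_def mat_act_refl_mat_unit)
  ultimately have "mat_act n (r2 * (r1 * g)) (unit_fun j) = unit_fun j"
    using cj by (simp add: mat_act_mult[OF rc(2) r1gc] mat_act_mult[OF rc(1) gc]
        mat_act_scalef scalef_scalef)
  then have "j \<notin> moved_coords n (r2 * (r1 * g))" by (simp add: moved_coords_def)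
  moreover have "moved_coords n (r2 * (r1 * g)) \<subseteq> moved_coords n g"
    using moved_coords_mult[OF rc(2) r1gc] moved_coords_mult[OF rc(1) gc] jl_moved
      moved_coords_refl_mat[OF j(1) l(1)] moved_coords_refl_mat[OF l(1) j(1)]
    unfolding r1_def r2_def by blast
  ultimately have "moved_coords n (r2 * (r1 * g)) \<subset> moved_coords n g" using jl_moved by blast
  moreover have "r2 * (r1 * g) \<in> Gdd d n"
    using Gdd_mult transp_refls_refls[OF assms(1)] refls_Gdd r assms(2) by blast
  moreover have "g = r1 * (r2 * (r2 * (r1 * g)))"
    using involution_cancel[OF rc(2) _ r1gc] involution_cancel[OF rc(1) _ gc]
      refl_mat_involution j l cj by (simp add: r1_def r2_def)
  ultimately show ?thesis using that r by blast
qed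

lemma transp_refls_generate:
  assumes "d \<ge> 1"
  shows "g \<in> Gdd d n \<Longrightarrow> \<exists>rs. set rs \<subseteq> transp_refls d n \<and> mprod n rs = g"
proof (induction "card (moved_coords n g)" arbitrary: g rule: less_induct)
  case less
  obtain \<pi> c where g: "bij_betw \<pi> {..<n} {..<n}" "g = monomial_mat n \<pi> c"
    "\<forall>j<n. c j \<noteq> 0 \<and> c j ^ d = 1" "(\<Prod>j<n. c j) = 1"
    by (rule Gdd_monomial[OF less.prems]) blast
  have factor: "\<exists>rs. set rs \<subseteq> transp_refls d n \<and> mprod n rs = g"
    if rs: "set rs \<subseteq> transp_refls d n" and g': "g' \<in> Gdd d n"
      and smaller: "moved_coords n g' \<subset> moved_coords n g" and eq: "g = mprod n rs * g'" for rs g'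
  proof -
    have "card (moved_coords n g') < card (moved_coords n g)"
      using smaller by (rule psubset_card_mono[rotated]) (simp add: moved_coords_def)
    then obtain rs' where rs': "set rs' \<subseteq> transp_refls d n" "mprod n rs' = g'"
      using less.hyps g' by blast
    have "set rs \<subseteq> carrier_mat n n" "set rs' \<subseteq> carrier_mat n n"
      using rs rs'(1) transp_refls_carrier by blast+
    then have "mprod n (rs @ rs') = g" using mprod_append eq rs'(2) by simp
    then show ?thesis using rs rs'(1) by (intro exI[of _ "rs @ rs'"]) auto
  qed
  consider (moving) j where "j < n" "\<pi> j \<noteq> j" | (diagonal) "\<forall>j<n. \<pi> j = j" by blast
  then show ?case
  proof cases
    case moving
    obtain r where r: "r \<in> transp_refls d n" "r * g \<in> Gdd d n"
      "moved_coords n (r * g) \<subset> moved_coords n g" "g = r * (r * g)"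
      by (rule moved_coords_reduce_perm[OF assms less.prems g(1-3) moving])
    have "mprod n [r] = r" using r(1) transp_refls_carrier by (auto intro: right_mult_one_mat)
    then show ?thesis using factor[of "[r]" "r * g"] r by simp
  next
    case diagonal
    then have gid: "g = monomial_mat n id c" using g(2) by (auto intro: monomial_mat_cong)
    show ?thesis
    proof (cases "\<exists>j<n. c j \<noteq> 1")
      case True
      then obtain j where j: "j < n" "c j \<noteq> 1" by blast
      obtain r1 r2 where r: "r1 \<in> transp_refls d n" "r2 \<in> transp_refls d n"
        "r2 * (r1 * g) \<in> Gdd d n" "moved_coords n (r2 * (r1 * g)) \<subset> moved_coords n g"
        "g = r1 * (r2 * (r2 * (r1 * g)))"
        by (rule moved_coords_reduce_diag[OF assms less.prems gid g(3,4) j])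
      have rc: "r1 \<in> carrier_mat n n" "r2 \<in> carrier_mat n n"
        using r(1,2) transp_refls_carrier by auto
      moreover have "r2 * (r1 * g) \<in> carrier_mat n n" using r(3) Gdd_carrier by blast
      ultimately have "mprod n [r1, r2] * (r2 * (r1 * g)) = g"
        using r(5) assoc_mult_mat by simp
      then show ?thesis using factor[of "[r1, r2]" "r2 * (r1 * g)"] r by simp
    next
      case False
      then have "g = mprod n []" using gid by (auto simp: one_mat_monomial intro: monomial_mat_cong)
      then show ?thesis by (intro exI[of _ "[]"]) simp
    qed
  qed
qed

lemma Gdd_refl_factorable: "d \<ge> 1 \<Longrightarrow> g \<in> Gdd d n \<Longrightarrow> refl_factorable d n g"
  unfolding refl_factorable_def using transp_refls_generate transp_refls_refls by (meson subset_trans)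

section \<open>Embedding the symmetric group\<close>

lemma absle_one:
  assumes "M \<in> Gdd d n"
  shows "absle d n (1\<^sub>m n) M"
proof -
  have "M \<in> carrier_mat n n" using assms Gdd_carrier by blast
  then show ?thesis unfolding absle_def using assms Gdd_one by (auto simp: absl_one intro!: bexI[of _ M])
qed

lemma mult_unit_vec_eq_col: "(A :: 'a :: semiring_1 mat) \<in> carrier_mat n n \<Longrightarrow> j < n \<Longrightarrow> A *\<^sub>v unit_vec n j = col A j"
  by (rule eq_vecI) auto

locale cycle_embedding =
  fixes n k :: nat and ks :: "nat list" and z :: "nat \<Rightarrow> complex" and d :: nat
  assumes len: "length ks = k" and dist: "distinct ks" and sub: "set ks \<subseteq> {..<n}"
    and z0: "\<And>i. i < k \<Longrightarrow> z i \<noteq> 0" and zd: "\<And>i. i < k \<Longrightarrow> z i ^ d = 1" and d1: "d \<ge> 1"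
begin

abbreviation K where "K \<equiv> set ks"

definition pos :: "nat \<Rightarrow> nat" where "pos a = (THE i. i < k \<and> ks ! i = a)"

lemma nth_inj: "i < k \<Longrightarrow> j < k \<Longrightarrow> ks ! i = ks ! j \<longleftrightarrow> i = j"
  using dist len by (simp add: nth_eq_iff_index_eq)

lemma nth_K[simp]: "i < k \<Longrightarrow> ks ! i \<in> K" using len by simp
lemma nth_less[simp]: "i < k \<Longrightarrow> ks ! i < n" using len sub nth_mem by blast
lemma K_less: "a \<in> K \<Longrightarrow> a < n" using sub by blast

lemma pos_spec: "a \<in> K \<Longrightarrow> pos a < k \<and> ks ! (pos a) = a"
proof -
  assume a: "a \<in> K"
  then obtain i where i: "i < k" "ks ! i = a" using len by (metis in_set_conv_nth)
  have "\<exists>!i. i < k \<and> ks ! i = a" using i nth_inj by blast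
  then show ?thesis unfolding pos_def by (rule theI')
qed

lemma pos_less[simp]: "a \<in> K \<Longrightarrow> pos a < k" using pos_spec by blast
lemma nth_pos[simp]: "a \<in> K \<Longrightarrow> ks ! (pos a) = a" using pos_spec by blast
lemma pos_nth[simp]: assumes "i < k" shows "pos (ks ! i) = i"
proof -
  have h: "pos (ks ! i) < k" "ks ! (pos (ks ! i)) = ks ! i" using pos_spec[of "ks ! i"] assms by auto
  show ?thesis using nth_inj[OF h(1) assms] h(2) by simp
qed

lemma bij_nth_K: "bij_betw ((!) ks) {..<k} K"
  by (rule bij_betw_nth) (use dist len in auto)

lemma sum_over_K: "(\<Sum>a<n. if a \<in> K then F a else 0) = (\<Sum>i<k. F (ks ! i))"
proof -
  have "(\<Sum>a<n. if a \<in> K then F a else 0) = sum F ({..<n} \<inter> K)"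
    by (simp add: sum.inter_restrict)
  also have "{..<n} \<inter> K = K" using sub by blast
  also have "sum F K = (\<Sum>i<k. F (ks ! i))"
    using sum.reindex_bij_betw[OF bij_nth_K, of F] by simp
  finally show ?thesis .
qed

text \<open>The permutation matrix \<open>M\<close> conjugated by \<open>diag z\<close> and placed on the coordinates \<open>ks\<close>.\<close>

definition emb :: "complex mat \<Rightarrow> complex mat" where
  "emb M = mat n n (\<lambda>(a, b). if a \<in> K \<and> b \<in> K then M $$ (pos a, pos b) * z (pos a) / z (pos b)
                             else if a = b then 1 else 0)"

lemma emb_carrier[simp]: "emb M \<in> carrier_mat n n" by (simp add: emb_def)
lemma emb_dims[simp]: "dim_row (emb M) = n" "dim_col (emb M) = n" by (simp_all add: emb_def)

lemma emb_index: "a < n \<Longrightarrow> b < n \<Longrightarrow> emb M $$ (a, b) =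
   (if a \<in> K \<and> b \<in> K then M $$ (pos a, pos b) * z (pos a) / z (pos b) else if a = b then 1 else 0)"
  by (simp add: emb_def)

lemma emb_mult:
  assumes M: "M \<in> carrier_mat k k" and N: "N \<in> carrier_mat k k"
  shows "emb (M * N) = emb M * emb N"
proof (rule eq_matI)
  fix a b assume "a < dim_row (emb M * emb N)" "b < dim_col (emb M * emb N)"
  then have ab: "a < n" "b < n" by auto
  have rhs: "(emb M * emb N) $$ (a, b) = (\<Sum>c<n. emb M $$ (a, c) * emb N $$ (c, b))"
    by (rule mat_mult_entry[OF emb_carrier emb_carrier ab])
  show "emb (M * N) $$ (a, b) = (emb M * emb N) $$ (a, b)"
  proof (cases "a \<in> K")
    case aK: True
    have "(\<Sum>c<n. emb M $$ (a, c) * emb N $$ (c, b))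
        = (\<Sum>c<n. if c \<in> K then M $$ (pos a, pos c) * z (pos a) / z (pos c) * emb N $$ (c, b) else 0)"
      by (rule sum.cong) (use aK ab in \<open>auto simp: emb_index\<close>)
    also have "\<dots> = (\<Sum>i<k. M $$ (pos a, pos (ks ! i)) * z (pos a) / z (pos (ks ! i)) * emb N $$ (ks ! i, b))"
      by (rule sum_over_K)
    also have "\<dots> = (\<Sum>i<k. M $$ (pos a, i) * z (pos a) / z i * emb N $$ (ks ! i, b))"
      by (rule sum.cong) simp_all
    finally have e: "(emb M * emb N) $$ (a, b) = (\<Sum>i<k. M $$ (pos a, i) * z (pos a) / z i * emb N $$ (ks ! i, b))"
      using rhs by simp
    show ?thesis
    proof (cases "b \<in> K")
      case bK: True
      have "(\<Sum>i<k. M $$ (pos a, i) * z (pos a) / z i * emb N $$ (ks ! i, b))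
          = (\<Sum>i<k. M $$ (pos a, i) * N $$ (i, pos b)) * z (pos a) / z (pos b)"
        unfolding sum_distrib_right sum_divide_distrib
        by (rule sum.cong) (use bK z0 ab in \<open>auto simp: emb_index field_simps\<close>)
      also have "\<dots> = (M * N) $$ (pos a, pos b) * z (pos a) / z (pos b)"
        using mat_mult_entry[OF M N, of "pos a" "pos b"] aK bK by simp
      finally show ?thesis using e aK bK ab by (simp add: emb_index)
    next
      case bK: False
      have "(\<Sum>i<k. M $$ (pos a, i) * z (pos a) / z i * emb N $$ (ks ! i, b)) = 0"
        by (rule sum.neutral) (use bK ab in \<open>auto simp: emb_index\<close>)
      then show ?thesis using e aK bK ab by (auto simp: emb_index)
    qed
  next
    case aK: False
    have "(\<Sum>c<n. emb M $$ (a, c) * emb N $$ (c, b)) = (\<Sum>c<n. if c = a then emb N $$ (c, b) else 0)"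
      by (rule sum.cong) (use aK ab in \<open>auto simp: emb_index\<close>)
    also have "\<dots> = emb N $$ (a, b)" using ab by simp
    finally show ?thesis using rhs aK ab by (simp add: emb_index)
  qed
qed auto

lemma emb_one: "emb (1\<^sub>m k) = 1\<^sub>m n"
proof (rule eq_matI)
  fix a b assume "a < dim_row (1\<^sub>m n)" "b < dim_col (1\<^sub>m n)"
  then have ab: "a < n" "b < n" by auto
  show "emb (1\<^sub>m k) $$ (a, b) = 1\<^sub>m n $$ (a, b)"
  proof (cases "a \<in> K \<and> b \<in> K")
    case True
    then have "pos a = pos b \<longleftrightarrow> a = b" by (metis nth_pos)
    then show ?thesis using True ab z0[of "pos b"] by (auto simp: emb_index)
  next
    case False
    then show ?thesis using ab by (auto simp: emb_index)
  qed
qed auto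

lemma emb_inj:
  assumes "M \<in> carrier_mat k k" "N \<in> carrier_mat k k" "emb M = emb N"
  shows "M = N"
proof (rule eq_matI)
  fix i j assume "i < dim_row N" "j < dim_col N"
  then have ij: "i < k" "j < k" using assms by auto
  have "emb M $$ (ks ! i, ks ! j) = emb N $$ (ks ! i, ks ! j)" using assms by simp
  then have "M $$ (i, j) * z i / z j = N $$ (i, j) * z i / z j" using ij by (simp add: emb_index)
  then show "M $$ (i, j) = N $$ (i, j)" using z0 ij by (simp add: field_simps)
qed (use assms in auto)

lemma mat_act_emb:
  "mat_act n (emb M) f a = (if a \<in> K then z (pos a) * (\<Sum>j<k. M $$ (pos a, j) * (f (ks ! j) / z j))
                         else if a < n then f a else 0)"
proof (cases "a \<in> K")
  case aK: True
  then have an: "a < n" by (rule K_less)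
  have "mat_act n (emb M) f a = (\<Sum>c<n. emb M $$ (a, c) * f c)" using an by (simp add: mat_act_def)
  also have "\<dots> = (\<Sum>c<n. if c \<in> K then z (pos a) * (M $$ (pos a, pos c) * (f c / z (pos c))) else 0)"
    by (rule sum.cong) (use aK an in \<open>auto simp: emb_index\<close>)
  also have "\<dots> = (\<Sum>i<k. z (pos a) * (M $$ (pos a, pos (ks ! i)) * (f (ks ! i) / z (pos (ks ! i)))))"
    by (rule sum_over_K)
  also have "\<dots> = (\<Sum>i<k. z (pos a) * (M $$ (pos a, i) * (f (ks ! i) / z i)))"
    by (rule sum.cong) simp_all
  finally show ?thesis using aK by (simp add: sum_distrib_left)
next
  case aK: False
  show ?thesis
  proof (cases "a < n")
    case True
    have "mat_act n (emb M) f a = (\<Sum>c<n. emb M $$ (a, c) * f c)" using True by (simp add: mat_act_def)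
    also have "\<dots> = (\<Sum>c<n. if c = a then f c else 0)"
      by (rule sum.cong) (use aK True in \<open>auto simp: emb_index\<close>)
    finally show ?thesis using True aK by simp
  qed (use aK in \<open>simp add: mat_act_def\<close>)
qed

lemma emb_refl_mat:
  assumes "i < k" "j < k" "i \<noteq> j"
  shows "emb (refl_mat k i j 1) = refl_mat n (ks ! i) (ks ! j) (z j / z i)"
proof (rule eq_matI)
  fix a b assume "a < dim_row (refl_mat n (ks ! i) (ks ! j) (z j / z i))"
    "b < dim_col (refl_mat n (ks ! i) (ks ! j) (z j / z i))"
  then have ab: "a < n" "b < n" by (auto simp: refl_mat_def)
  have pq: "ks ! i \<noteq> ks ! j" using assms nth_inj by blast
  have zi: "z i \<noteq> 0" "z j \<noteq> 0" using z0 assms by auto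
  show "emb (refl_mat k i j 1) $$ (a, b) = refl_mat n (ks ! i) (ks ! j) (z j / z i) $$ (a, b)"
  proof (cases "a \<in> K \<and> b \<in> K")
    case True
    then have ia: "pos a < k" "pos b < k" by auto
    have l: "emb (refl_mat k i j 1) $$ (a, b) =
      (if pos a = Transposition.transpose i j (pos b) then refl_coeff i j 1 (pos b) else 0) * z (pos a) / z (pos b)"
      using True ab ia by (simp add: emb_index refl_mat_def monomial_mat_index)
    have r: "refl_mat n (ks ! i) (ks ! j) (z j / z i) $$ (a, b) =
      (if a = Transposition.transpose (ks ! i) (ks ! j) b then refl_coeff (ks ! i) (ks ! j) (z j / z i) b else 0)"
      using ab by (simp add: refl_mat_def monomial_mat_index)
    have ea: "a = ks ! (pos a)" "b = ks ! (pos b)" using True by auto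
    consider "pos b = i" | "pos b = j" | "pos b \<noteq> i \<and> pos b \<noteq> j" by blast
    then show ?thesis
    proof cases
      case 1
      then have "b = ks ! i" using ea by simp
      moreover have "a = ks ! j \<longleftrightarrow> pos a = j" using ea assms ia nth_inj by metis
      ultimately show ?thesis using l r 1 pq assms zi by (auto simp: refl_coeff_def)
    next
      case 2
      then have "b = ks ! j" using ea by simp
      moreover have "a = ks ! i \<longleftrightarrow> pos a = i" using ea assms ia nth_inj by metis
      ultimately show ?thesis using l r 2 pq assms zi by (auto simp: refl_coeff_def field_simps)
    next
      case 3
      then have "b \<noteq> ks ! i" "b \<noteq> ks ! j" using ea assms by auto
      moreover have "a = b \<longleftrightarrow> pos a = pos b" using ea by metis
      moreover have "z (pos b) \<noteq> 0" using z0 ia by blast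
      ultimately show ?thesis using l r 3 pq assms zi by (auto simp: refl_coeff_def transpose_def)
    qed
  next
    case False
    have r: "refl_mat n (ks ! i) (ks ! j) (z j / z i) $$ (a, b) =
      (if a = Transposition.transpose (ks ! i) (ks ! j) b then refl_coeff (ks ! i) (ks ! j) (z j / z i) b else 0)"
      using ab by (simp add: refl_mat_def monomial_mat_index)
    have "Transposition.transpose (ks ! i) (ks ! j) b \<in> K \<longleftrightarrow> b \<in> K" using assms by (auto simp: transpose_def)
    then show ?thesis using False ab r assms by (auto simp: emb_index transpose_def refl_coeff_def)
  qed
qed (auto simp: refl_mat_def)

lemma emb_mprod: "set rs \<subseteq> carrier_mat k k \<Longrightarrow> emb (mprod k rs) = mprod n (map emb rs)"
proof (induction rs)
  case Nil then show ?case by (simp add: emb_one)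
next
  case (Cons r rs)
  then show ?case by (simp add: emb_mult mprod_carrier)
qed

lemma root_ratio_pow: "i < k \<Longrightarrow> j < k \<Longrightarrow> (z j / z i) ^ d = 1"
  using zd by (simp add: power_divide)

lemma emb_transp_refls: "r \<in> transp_refls 1 k \<Longrightarrow> emb r \<in> transp_refls d n"
proof -
  assume "r \<in> transp_refls 1 k"
  then obtain i j c where r: "r = refl_mat k i j c" "i < k" "j < k" "i \<noteq> j" "c ^ 1 = 1"
    unfolding transp_refls_def by blast
  have "emb r = refl_mat n (ks ! i) (ks ! j) (z j / z i)" using r emb_refl_mat by simp
  moreover have "ks ! i \<noteq> ks ! j" using r nth_inj by blast
  moreover have "(z j / z i) ^ d = 1" using root_ratio_pow r by blast
  moreover have "ks ! i < n" "ks ! j < n" using r by auto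
  ultimately show ?thesis unfolding transp_refls_def by blast
qed

lemma emb_Gdd:
  assumes "M \<in> Gdd 1 k"
  shows "emb M \<in> Gdd d n" "refl_factorable d n (emb M)"
proof -
  obtain rs where rs: "set rs \<subseteq> transp_refls 1 k" "mprod k rs = M"
    using transp_refls_generate[of 1 M k] assms by auto
  have c: "set rs \<subseteq> carrier_mat k k" using rs transp_refls_carrier by blast
  have e: "emb M = mprod n (map emb rs)" using emb_mprod[OF c] rs by simp
  have "set (map emb rs) \<subseteq> transp_refls d n" using rs emb_transp_refls by auto
  then have r: "set (map emb rs) \<subseteq> refls d n" using transp_refls_refls[OF d1] by blast
  then show "emb M \<in> Gdd d n" unfolding e using refls_Gdd by (metis mprod_Gdd subset_trans)
  show "refl_factorable d n (emb M)" unfolding refl_factorable_def e using r by blast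
qed

lemma mult_mat_vec_as_mat_act: "M \<in> carrier_mat n n \<Longrightarrow> v \<in> carrier_vec n \<Longrightarrow> l < n \<Longrightarrow>
    (M *\<^sub>v v) $ l = mat_act n M (\<lambda>i. if i < n then v $ i else 0) l"
  by (simp add: mat_act_def scalar_prod_def atLeast0LessThan)

lemma mat_act_emb_fixed:
  assumes "mat_act k R (\<lambda>i. if i < k then f (ks ! i) / z i else 0) = (\<lambda>i. if i < k then f (ks ! i) / z i else 0)"
    and "f \<in> coord_space n"
  shows "mat_act n (emb R) f = f"
proof
  fix l show "mat_act n (emb R) f l = f l"
  proof (cases "l \<in> K")
    case True
    have "(\<Sum>j<k. R $$ (pos l, j) * (f (ks ! j) / z j)) = f l / z (pos l)"
      using fun_cong[OF assms(1), of "pos l"] True by (simp add: mat_act_def)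
    then show ?thesis using True z0[of "pos l"] by (simp add: mat_act_emb)
  next
    case False
    then show ?thesis using assms(2) by (simp add: mat_act_emb coord_space_def)
  qed
qed

lemma emb_refls:
  assumes R: "R \<in> refls 1 k"
  shows "emb R \<in> refls d n"
proof -
  have RG: "R \<in> Gdd 1 k" and R1: "R \<noteq> 1\<^sub>m k" using R by (auto simp: refls_def)
  have Rc: "R \<in> carrier_mat k k" using RG Gdd_carrier by blast
  obtain a where a: "a \<in> carrier_vec k" "a \<noteq> 0\<^sub>v k"
    and fx: "\<forall>v\<in>carrier_vec k. a \<bullet> v = 0 \<longrightarrow> R *\<^sub>v v = v"
    using R by (auto simp: refls_def)
  obtain p where p: "p < k" "a $ p \<noteq> 0" using a by (metis eq_vecI index_zero_vec(1,2) carrier_vecD)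
  have "emb R \<noteq> emb (1\<^sub>m k)" using emb_inj[OF Rc] R1 by auto
  then have ne: "emb R \<noteq> 1\<^sub>m n" by (simp add: emb_one)
  define b where "b = vec n (\<lambda>l. if l \<in> K then a $ (pos l) / z (pos l) else 0)"
  have b0: "b \<noteq> 0\<^sub>v n"
  proof
    assume "b = 0\<^sub>v n"
    then have "b $ (ks ! p) = 0\<^sub>v n $ (ks ! p)" by simp
    then show False using p z0[of p] by (simp add: b_def)
  qed
  have fxn: "emb R *\<^sub>v v = v" if v: "v \<in> carrier_vec n" "b \<bullet> v = 0" for v
  proof -
    define f where "f = (\<lambda>i. if i < n then v $ i else (0::complex))"
    define y where "y = (\<lambda>i. if i < k then f (ks ! i) / z i else 0)"
    have "(\<Sum>i<k. a $ i * y i) = (\<Sum>i<k. a $ (pos (ks ! i)) / z (pos (ks ! i)) * v $ (ks ! i))"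
      by (rule sum.cong) (auto simp: y_def f_def)
    also have "\<dots> = (\<Sum>l<n. if l \<in> K then a $ (pos l) / z (pos l) * v $ l else 0)"
      by (rule sum_over_K[symmetric])
    also have "\<dots> = (\<Sum>l<n. b $ l * v $ l)" by (rule sum.cong) (auto simp: b_def)
    also have "\<dots> = b \<bullet> v" using v by (simp add: scalar_prod_def atLeast0LessThan)
    finally have "mat_act k R y = y"
      using mat_act_fix_if_orthogonal[OF Rc a(1) fx] v by (simp add: y_def coord_space_def)
    then have "mat_act n (emb R) f = f"
      by (intro mat_act_emb_fixed) (simp_all add: y_def f_def coord_space_def)
    then show ?thesis
      using mult_mat_vec_as_mat_act[OF emb_carrier v(1)] v by (intro eq_vecI) (simp_all add: f_def)
  qed
  show ?thesis unfolding refls_def using emb_Gdd[OF RG] ne b0 fxn by (auto simp: b_def)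
qed

lemma absl_emb_le:
  assumes "M \<in> Gdd 1 k"
  shows "absl d n (emb M) \<le> absl 1 k M"
proof -
  have fM: "refl_factorable 1 k M" using Gdd_refl_factorable[of 1 M k] assms by simp
  obtain rs where rs: "set rs \<subseteq> refls 1 k" "mprod k rs = M" "length rs = absl 1 k M"
    by (rule absl_factorization[OF fM])
  have c: "set rs \<subseteq> carrier_mat k k" using rs refls_Gdd Gdd_carrier by blast
  have "emb M = mprod n (map emb rs)" using emb_mprod[OF c] rs by simp
  moreover have "set (map emb rs) \<subseteq> refls d n" using rs emb_refls by auto
  ultimately show ?thesis using absl_mprod_le[of "map emb rs" d n] rs by simp
qed

lemma mat_act_emb_unit:
  assumes M: "M \<in> carrier_mat k k" and i: "i < k"
  shows "mat_act n (emb M) (unit_fun (ks ! i)) a = (if a \<in> K then z (pos a) / z i * M $$ (pos a, i) else 0)"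
proof (cases "a \<in> K")
  case True
  have "(\<Sum>j<k. M $$ (pos a, j) * (unit_fun (ks ! i) (ks ! j) / z j))
      = (\<Sum>j<k. if j = i then M $$ (pos a, j) / z i else 0)"
    by (rule sum.cong) (use i nth_inj in \<open>auto simp: unit_fun_def\<close>)
  then show ?thesis using True i by (simp add: mat_act_emb)
next
  case False
  then have "a \<noteq> ks ! i" using i by auto
  then show ?thesis using False by (simp add: mat_act_emb unit_fun_def)
qed

lemma mov_dim_emb_transp_mult_less:
  assumes \<sigma>: "bij_betw \<sigma> {..<k} {..<k}" and i: "i < k" "\<sigma> i \<noteq> i"
    and M: "M = monomial_mat k \<sigma> (\<lambda>_. 1)"
  shows "mov_dim n (emb (refl_mat k i (\<sigma> i) 1 * M)) < mov_dim n (emb M)"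
proof -
  define j where "j = \<sigma> i"
  have j: "j < k" "i \<noteq> j" using i bij_betw_lessThan_less[OF \<sigma>] by (auto simp: j_def)
  define p where "p = ks ! i"
  define q where "q = ks ! j"
  have pq: "p < n" "q < n" "p \<noteq> q" using i j nth_inj by (auto simp: p_def q_def)
  have zi: "z i \<noteq> 0" "z j \<noteq> 0" using z0 i j by auto
  have Mc: "M \<in> carrier_mat k k" using M by simp
  have "emb (refl_mat k i j 1 * M) = refl_mat n p q (z j / z i) * emb M"
    using emb_mult[OF _ Mc] emb_refl_mat i j by (simp add: p_def q_def refl_mat_def)
  moreover have "mat_act n (emb M) (unit_fun p) = scalef (z j / z i) (unit_fun q)"
  proof
    fix a
    have "a \<in> K \<Longrightarrow> pos a = j \<longleftrightarrow> a = q" using j by (auto simp: q_def)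
    moreover have "a \<in> K \<Longrightarrow> M $$ (pos a, i) = (if pos a = j then 1 else 0)"
      using i by (simp add: M monomial_mat_index j_def)
    ultimately have "a \<in> K \<Longrightarrow> M $$ (pos a, i) = (if a = q then 1 else 0)" by simp
    then show "mat_act n (emb M) (unit_fun p) a = scalef (z j / z i) (unit_fun q) a"
      using mat_act_emb_unit[OF Mc i(1), of a] pq j by (auto simp: p_def q_def scalef_def unit_fun_def)
  qed
  ultimately have sub: "mov n (emb (refl_mat k i j 1 * M)) \<subseteq> mov n (emb M)"
    using mov_refl_mat_mult_subset[OF emb_carrier pq] zi by simp
  define y0 where "y0 = mat_act n (emb M) (unit_fun p) - unit_fun p"
  have y0: "y0 \<in> mov n (emb M)" unfolding y0_def mov_def using pq by auto
  have y0p: "y0 p = - 1" using \<open>mat_act n (emb M) (unit_fun p) = _\<close> pq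
    by (simp add: y0_def scalef_def unit_fun_def)
  have fix_p: "mat_act n (emb (refl_mat k i j 1 * M)) f p = f p" for f
  proof -
    have row: "l < k \<Longrightarrow> (refl_mat k i j 1 * M) $$ (i, l) = (if l = i then 1 else 0)" for l
      unfolding M j_def by (rule refl_mat_mult_perm_row[OF \<sigma> i])
    have "(\<Sum>l<k. (refl_mat k i j 1 * M) $$ (i, l) * (f (ks ! l) / z l))
        = (\<Sum>l<k. if l = i then f (ks ! l) / z l else 0)"
      by (rule sum.cong) (simp_all add: row)
    also have "\<dots> = f p / z i" using i by (simp add: p_def)
    finally have "(\<Sum>l<k. (refl_mat k i j 1 * M) $$ (i, l) * (f (ks ! l) / z l)) = f p / z i" .
    then show ?thesis using pq zi i by (simp add: mat_act_emb p_def)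
  qed
  have "y0 \<notin> mov n (emb (refl_mat k i j 1 * M))"
  proof
    assume "y0 \<in> mov n (emb (refl_mat k i j 1 * M))"
    then have "y0 p = 0" by (rule mov_vanishes_at_fixed_coord[OF fix_p])
    then show False using y0p by simp
  qed
  then show ?thesis
    unfolding mov_dim_def j_def[symmetric] by (rule dim_less_of_subspace[OF mov_coord_space sub mov_subspace y0])
qed

lemma absl_le_mov_dim_emb:
  "M \<in> Gdd 1 k \<Longrightarrow> absl 1 k M \<le> mov_dim n (emb M)"
proof (induction "mov_dim n (emb M)" arbitrary: M rule: less_induct)
  case less
  obtain \<sigma> e where \<sigma>: "bij_betw \<sigma> {..<k} {..<k}" and M: "M = monomial_mat k \<sigma> e"
    and e: "\<forall>j<k. e j \<noteq> 0 \<and> e j ^ 1 = 1"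
    by (rule Gdd_monomial[OF less.prems]) blast
  have M1: "M = monomial_mat k \<sigma> (\<lambda>_. 1)" using M e by (auto intro: monomial_mat_cong)
  show ?case
  proof (cases "\<exists>i<k. \<sigma> i \<noteq> i")
    case False
    then have "M = 1\<^sub>m k" using M1 by (auto simp: one_mat_monomial intro: monomial_mat_cong)
    then show ?thesis by (simp add: absl_one)
  next
    case True
    then obtain i where i: "i < k" "\<sigma> i \<noteq> i" by blast
    define \<tau> where "\<tau> = refl_mat k i (\<sigma> i) 1"
    have \<tau>: "\<tau> \<in> refls 1 k" "\<tau> * \<tau> = 1\<^sub>m k"
      using i bij_betw_lessThan_less[OF \<sigma>] by (auto simp: \<tau>_def refl_mat_refls refl_mat_involution)
    have \<tau>c: "\<tau> \<in> carrier_mat k k" and Mc: "M \<in> carrier_mat k k" using M by (simp_all add: \<tau>_def refl_mat_def)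
    have \<tau>M: "\<tau> * M \<in> Gdd 1 k" using Gdd_mult \<tau>(1) refls_Gdd less.prems by blast
    have less_dim: "mov_dim n (emb (\<tau> * M)) < mov_dim n (emb M)"
      unfolding \<tau>_def by (rule mov_dim_emb_transp_mult_less[OF \<sigma> i M1])
    obtain rs where rs: "set rs \<subseteq> refls 1 k" "mprod k rs = \<tau> * M" "length rs = absl 1 k (\<tau> * M)"
      by (rule absl_factorization[OF Gdd_refl_factorable[OF _ \<tau>M]]) simp
    have "M = mprod k (\<tau> # rs)" using rs(2) involution_cancel[OF \<tau>c \<tau>(2) Mc] by simp
    then have "absl 1 k M \<le> 1 + absl 1 k (\<tau> * M)"
      using absl_mprod_le[of "\<tau> # rs" 1 k] rs \<tau>(1) by simp
    then show ?thesis using less.hyps[OF less_dim \<tau>M] less_dim by simp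
  qed
qed

lemma absl_emb:
  assumes "M \<in> Gdd 1 k"
  shows "absl d n (emb M) = absl 1 k M" "mov_dim n (emb M) = absl 1 k M"
proof -
  have mov_le: "mov_dim n (emb M) \<le> absl d n (emb M)" using mov_dim_le_absl emb_Gdd[OF assms] by blast
  have emb_le: "absl d n (emb M) \<le> absl 1 k M" by (rule absl_emb_le[OF assms])
  have le_mov: "absl 1 k M \<le> mov_dim n (emb M)" by (rule absl_le_mov_dim_emb[OF assms])
  show "absl d n (emb M) = absl 1 k M" "mov_dim n (emb M) = absl 1 k M" using mov_le emb_le le_mov by auto
qed

text \<open>Fixed by every \<^term>\<open>emb M\<close>, because the rows of a permutation matrix sum to 1.\<close>

definition cycle_vec :: "nat \<Rightarrow> complex" where "cycle_vec a = (if a \<in> K then z (pos a) else 0)"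

lemma cycle_vec_coord_space: "cycle_vec \<in> coord_space n" by (auto simp: cycle_vec_def coord_space_def dest: K_less)

lemma emb_fixes_unit_outside: "l < n \<Longrightarrow> l \<notin> K \<Longrightarrow> mat_act n (emb N) (unit_fun l) = unit_fun l"
proof
  fix a assume l: "l < n" "l \<notin> K"
  show "mat_act n (emb N) (unit_fun l) a = unit_fun l a"
  proof (cases "a \<in> K")
    case True
    have "(\<Sum>j<k. N $$ (pos a, j) * (unit_fun l (ks ! j) / z j)) = 0"
      by (rule sum.neutral) (use l in \<open>auto simp: unit_fun_def\<close>)
    then show ?thesis using True l by (auto simp: mat_act_emb unit_fun_def)
  next
    case False
    then show ?thesis using l by (auto simp: mat_act_emb unit_fun_def)
  qed
qed

lemma emb_fixes_cycle_vec: "N \<in> Gdd 1 k \<Longrightarrow> mat_act n (emb N) cycle_vec = cycle_vec"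
proof
  fix a assume N: "N \<in> Gdd 1 k"
  show "mat_act n (emb N) cycle_vec a = cycle_vec a"
  proof (cases "a \<in> K")
    case True
    have "(\<Sum>j<k. N $$ (pos a, j) * (cycle_vec (ks ! j) / z j)) = (\<Sum>j<k. N $$ (pos a, j))"
      by (rule sum.cong) (use z0 in \<open>auto simp: cycle_vec_def\<close>)
    also have "\<dots> = 1" using Gdd_1_row_sum[OF N] True by simp
    finally show ?thesis using True by (simp add: mat_act_emb cycle_vec_def)
  next
    case False
    then show ?thesis by (auto simp: mat_act_emb cycle_vec_def)
  qed
qed

definition compress :: "complex mat \<Rightarrow> complex mat" where
  "compress u = mat k k (\<lambda>(i, j). u $$ (ks ! i, ks ! j) * z j / z i)"

lemma emb_compress:
  assumes u: "u \<in> carrier_mat n n"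
    and block: "\<And>a b. a < n \<Longrightarrow> b < n \<Longrightarrow> a \<notin> K \<or> b \<notin> K \<Longrightarrow> u $$ (a, b) = (if a = b then 1 else 0)"
  shows "emb (compress u) = u"
proof (rule eq_matI)
  fix a b assume "a < dim_row u" "b < dim_col u"
  then have ab: "a < n" "b < n" using u by auto
  show "emb (compress u) $$ (a, b) = u $$ (a, b)"
    using ab z0 block[OF ab] by (cases "a \<in> K \<and> b \<in> K") (auto simp: emb_index compress_def)
qed (use u in auto)

lemma compress_monomial_Gdd:
  assumes \<pi>: "bij_betw \<pi> {..<n} {..<n}" and K: "\<And>b. b \<in> K \<Longrightarrow> \<pi> b \<in> K"
    and c: "\<And>i. i < k \<Longrightarrow> c (ks ! i) * z i = z (pos (\<pi> (ks ! i)))"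
  shows "compress (monomial_mat n \<pi> c) \<in> Gdd 1 k"
proof -
  define \<sigma> where "\<sigma> i = pos (\<pi> (ks ! i))" for i
  have \<sigma>lt: "i < k \<Longrightarrow> \<sigma> i < k" for i using K by (simp add: \<sigma>_def)
  have \<sigma>nth: "i < k \<Longrightarrow> ks ! (\<sigma> i) = \<pi> (ks ! i)" for i using K by (simp add: \<sigma>_def)
  have "inj_on \<sigma> {..<k}"
  proof (rule inj_onI)
    fix i j assume ij: "i \<in> {..<k}" "j \<in> {..<k}" "\<sigma> i = \<sigma> j"
    then have "\<pi> (ks ! i) = \<pi> (ks ! j)" using \<sigma>nth by (metis lessThan_iff)
    then have "ks ! i = ks ! j" using \<pi> ij by (auto simp: bij_betw_def inj_on_def)
    then show "i = j" using nth_inj ij by auto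
  qed
  then have \<sigma>: "bij_betw \<sigma> {..<k} {..<k}"
    unfolding bij_betw_def using \<sigma>lt endo_inj_surj[of "{..<k}" \<sigma>] by auto
  have "compress (monomial_mat n \<pi> c) = monomial_mat k \<sigma> (\<lambda>_. 1)"
  proof (rule eq_matI)
    fix i j assume "i < dim_row (monomial_mat k \<sigma> (\<lambda>_. 1))" "j < dim_col (monomial_mat k \<sigma> (\<lambda>_. 1))"
    then have ij: "i < k" "j < k" by auto
    have "ks ! i = \<pi> (ks ! j) \<longleftrightarrow> i = \<sigma> j"
      using \<sigma>nth[OF ij(2)] nth_inj[OF ij(1) \<sigma>lt[OF ij(2)]] by auto
    then show "compress (monomial_mat n \<pi> c) $$ (i, j) = monomial_mat k \<sigma> (\<lambda>_. 1) $$ (i, j)"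
      using ij c[OF ij(2)] z0 by (auto simp: compress_def monomial_mat_index \<sigma>_def)
  qed (auto simp: compress_def)
  then show ?thesis using \<sigma> by (auto intro: monomial_mat_Gdd)
qed

lemma in_emb_image_if_fixes:
  assumes uG: "u \<in> Gdd d n"
    and fe: "\<And>l. l < n \<Longrightarrow> l \<notin> K \<Longrightarrow> mat_act n u (unit_fun l) = unit_fun l"
    and fv: "mat_act n u cycle_vec = cycle_vec"
  shows "\<exists>M\<in>Gdd 1 k. u = emb M"
proof -
  obtain \<pi> c where \<pi>: "bij_betw \<pi> {..<n} {..<n}" and u: "u = monomial_mat n \<pi> c"
    by (rule Gdd_monomial[OF uG]) blast
  have outK: "\<pi> l = l \<and> c l = 1" if l: "l < n" "l \<notin> K" for l
    using fe[OF l] scalef_unit_fun_eq mat_act_monomial_unit[of l n \<pi> c] bij_betw_lessThan_less[OF \<pi>] l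
    by (simp add: u)
  have inK: "\<pi> b \<in> K" if b: "b \<in> K" for b
  proof (rule ccontr)
    assume "\<pi> b \<notin> K"
    then have "\<pi> (\<pi> b) = \<pi> b" using outK bij_betw_lessThan_less[OF \<pi>] b K_less by blast
    then have "\<pi> b = b" using \<pi> b K_less bij_betw_lessThan_less[OF \<pi>] by (auto simp: bij_betw_def inj_on_def)
    then show False using b \<open>\<pi> b \<notin> K\<close> by simp
  qed
  have "u = emb (compress u)"
  proof (rule emb_compress[symmetric])
    fix a b assume ab: "a < n" "b < n" "a \<notin> K \<or> b \<notin> K"
    show "u $$ (a, b) = (if a = b then 1 else 0)"
      using ab outK inK by (cases "b \<in> K") (auto simp: u monomial_mat_index)
  qed (simp add: u)
  moreover have "c (ks ! i) * z i = z (pos (\<pi> (ks ! i)))" if i: "i < k" for i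
  proof -
    have "mat_act n u cycle_vec (\<pi> (ks ! i)) = c (ks ! i) * cycle_vec (ks ! i)"
      unfolding u by (rule mat_act_monomial_at[OF \<pi>]) (use i in simp)
    then show ?thesis using fv i inK by (simp add: cycle_vec_def)
  qed
  ultimately show ?thesis using compress_monomial_Gdd[OF \<pi> inK] u by blast
qed

text \<open>Additivity of length forces the moved spaces of \<open>u\<close> and \<open>x\<close> to meet trivially, so both fix
  every vector fixed by \<open>u x\<close>.\<close>

lemma absle_factors_in_emb_image:
  assumes NG: "N \<in> Gdd 1 k" and uG: "u \<in> Gdd d n" and xG: "x \<in> Gdd d n"
    and ux: "u * x = emb N" and len: "absl d n (emb N) = absl d n u + absl d n x"
  shows "\<exists>M\<in>Gdd 1 k. u = emb M" "\<exists>X\<in>Gdd 1 k. x = emb X"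
proof -
  have uc: "u \<in> carrier_mat n n" and xc: "x \<in> carrier_mat n n" using uG xG Gdd_carrier by auto
  have ru: "mov_dim n u \<le> absl d n u" using mov_dim_le_absl Gdd_refl_factorable[OF d1 uG] by blast
  have rx: "mov_dim n x \<le> absl d n x" using mov_dim_le_absl Gdd_refl_factorable[OF d1 xG] by blast
  have rw: "mov_dim n (emb N) = absl d n (emb N)" using absl_emb[OF NG] by simp
  have sp: "mov n (emb N) \<subseteq> cfun.span (mov n u \<union> mov n x)" using mov_mult_subset_span[OF uc xc] ux by simp
  have int0: "y \<in> mov n u \<Longrightarrow> y \<in> mov n x \<Longrightarrow> y = 0" for y
    by (rule dim_additive_imp_Int_zero[OF mov_coord_space mov_coord_space sp]) (use ru rx rw len in \<open>auto simp: mov_dim_def\<close>)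
  have fixboth: "mat_act n u hv = hv \<and> mat_act n x hv = hv" if hv: "hv \<in> coord_space n" "mat_act n (emb N) hv = hv" for hv
  proof -
    have e: "mat_act n u (mat_act n x hv) = hv" using hv mat_act_mult[OF uc xc] ux by simp
    define y where "y = mat_act n x hv - hv"
    have yx: "y \<in> mov n x" unfolding y_def mov_def using hv by blast
    have "mat_act n u (mat_act n x hv) - mat_act n x hv \<in> mov n u" unfolding mov_def by auto
    then have "- y \<in> mov n u" using e by (simp add: y_def)
    then have "y \<in> mov n u" using mov_uminus by fastforce
    then have "y = 0" using int0 yx by blast
    then have "mat_act n x hv = hv" by (simp add: y_def)
    then show ?thesis using e by simp
  qed
  have fe: "mat_act n u (unit_fun l) = unit_fun l \<and> mat_act n x (unit_fun l) = unit_fun l" if "l < n" "l \<notin> K" for l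
    using fixboth[OF unit_fun_coord_space[OF that(1)] emb_fixes_unit_outside[OF that]] .
  have fv: "mat_act n u cycle_vec = cycle_vec \<and> mat_act n x cycle_vec = cycle_vec"
    using fixboth[OF cycle_vec_coord_space emb_fixes_cycle_vec[OF NG]] .
  show "\<exists>M\<in>Gdd 1 k. u = emb M" by (rule in_emb_image_if_fixes[OF uG]) (use fe fv in auto)
  show "\<exists>X\<in>Gdd 1 k. x = emb X" by (rule in_emb_image_if_fixes[OF xG]) (use fe fv in auto)
qed

lemma absle_emb_iff:
  assumes M: "M \<in> Gdd 1 k" and N: "N \<in> Gdd 1 k"
  shows "absle d n (emb M) (emb N) \<longleftrightarrow> absle 1 k M N"
proof
  assume "absle d n (emb M) (emb N)"
  then obtain x where x: "x \<in> Gdd d n" "emb M * x = emb N"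
    "absl d n (emb N) = absl d n (emb M) + absl d n x"
    by (auto simp: absle_def)
  obtain X where X: "X \<in> Gdd 1 k" "x = emb X"
    using absle_factors_in_emb_image(2)[OF N emb_Gdd(1)[OF M] x(1) x(2,3)] by blast
  have Mc: "M \<in> carrier_mat k k" and Xc: "X \<in> carrier_mat k k" and Nc: "N \<in> carrier_mat k k"
    using M X N Gdd_carrier by auto
  have "emb (M * X) = emb N" using x X emb_mult[OF Mc Xc] by simp
  then have MX: "M * X = N" using emb_inj[OF mult_carrier_mat[OF Mc Xc] Nc] by simp
  have "absl 1 k N = absl 1 k M + absl 1 k X" using x X absl_emb M N by simp
  then show "absle 1 k M N" unfolding absle_def using M N X MX by blast
next
  assume "absle 1 k M N"
  then obtain X where X: "X \<in> Gdd 1 k" "M * X = N" "absl 1 k N = absl 1 k M + absl 1 k X"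
    by (auto simp: absle_def)
  have Mc: "M \<in> carrier_mat k k" and Xc: "X \<in> carrier_mat k k"
    using M X Gdd_carrier by auto
  have "emb M * emb X = emb N" using emb_mult[OF Mc Xc] X by simp
  moreover have "absl d n (emb N) = absl d n (emb M) + absl d n (emb X)" using X absl_emb M N by simp
  ultimately show "absle d n (emb M) (emb N)" unfolding absle_def
    using emb_Gdd(1) M N X by blast
qed

lemma emb_mult_unit_vec_outside:
  assumes "j < n" "j \<notin> K"
  shows "emb M *\<^sub>v unit_vec n j = unit_vec n j"
  using assms by (auto simp: mult_unit_vec_eq_col emb_index intro!: eq_vecI)

lemma emb_long_cycle_mult_unit_vec:
  assumes i: "i < k"
  shows "emb (long_cycle k) *\<^sub>v (z i \<cdot>\<^sub>v unit_vec n (ks ! i))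
       = z ((i + 1) mod k) \<cdot>\<^sub>v unit_vec n (ks ! ((i + 1) mod k))"
proof (rule eq_vecI)
  fix a assume "a < dim_vec (z ((i + 1) mod k) \<cdot>\<^sub>v unit_vec n (ks ! ((i + 1) mod k)))"
  then have a: "a < n" by simp
  have "a \<in> K \<Longrightarrow> pos a = (i + 1) mod k \<longleftrightarrow> a = ks ! ((i + 1) mod k)"
    using i by (metis nth_pos pos_nth mod_less_divisor gr_implies_not0 neq0_conv)
  then show "(emb (long_cycle k) *\<^sub>v (z i \<cdot>\<^sub>v unit_vec n (ks ! i))) $ a
      = (z ((i + 1) mod k) \<cdot>\<^sub>v unit_vec n (ks ! ((i + 1) mod k))) $ a"
    using a i z0[OF i] mult_mat_vec[OF emb_carrier unit_vec_carrier]
    by (auto simp: mult_unit_vec_eq_col emb_index long_cycle_def)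
qed simp

lemma interval_emb:
  assumes C: "C \<in> Gdd 1 k"
  shows "interval d n (emb C) = emb ` {M. absle 1 k M C}"
proof
  show "interval d n (emb C) \<subseteq> emb ` {M. absle 1 k M C}"
  proof
    fix u assume "u \<in> interval d n (emb C)"
    then have u: "absle d n u (emb C)" by (simp add: interval_def)
    then obtain M where M: "M \<in> Gdd 1 k" "u = emb M"
      using absle_factors_in_emb_image(1)[OF C] by (auto simp: absle_def)
    then show "u \<in> emb ` {M. absle 1 k M C}" using u absle_emb_iff[OF M(1) C] by auto
  qed
next
  show "emb ` {M. absle 1 k M C} \<subseteq> interval d n (emb C)"
  proof
    fix u assume "u \<in> emb ` {M. absle 1 k M C}"
    then obtain M where M: "absle 1 k M C" "u = emb M" by blast
    then have MG: "M \<in> Gdd 1 k" by (simp add: absle_def)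
    have "absle d n (emb (1\<^sub>m k)) (emb M)"
      using absle_emb_iff[OF Gdd_one MG] absle_one[OF MG] by simp
    then show "u \<in> interval d n (emb C)"
      using absle_emb_iff[OF MG C] M by (simp add: interval_def emb_one)
  qed
qed

lemma interval_emb_order_iso:
  assumes C: "C \<in> Gdd 1 k"
  shows "\<exists>f. bij_betw f (interval d n (emb C)) {M. absle 1 k M C} \<and>
           (\<forall>u \<in> interval d n (emb C). \<forall>v \<in> interval d n (emb C).
               absle d n u v \<longleftrightarrow> absle 1 k (f u) (f v))"
proof -
  let ?I = "{M. absle 1 k M C}"
  have IG: "?I \<subseteq> Gdd 1 k" by (auto simp: absle_def)
  have inj: "inj_on emb ?I"
    using emb_inj IG Gdd_carrier by (metis (no_types, lifting) inj_onI subset_iff)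
  then have bij: "bij_betw emb ?I (interval d n (emb C))"
    by (simp add: bij_betw_def interval_emb[OF C])
  have "absle d n (emb M) (emb N) \<longleftrightarrow> absle 1 k (inv_into ?I emb (emb M)) (inv_into ?I emb (emb N))"
    if "M \<in> ?I" "N \<in> ?I" for M N
    using that absle_emb_iff IG inv_into_f_f[OF inj] by (metis subsetD)
  then show ?thesis
    using bij_betw_inv_into[OF bij] interval_emb[OF C] by (intro exI[of _ "inv_into ?I emb"]) auto
qed

end

section \<open>Single simultaneous cycles\<close>

lemma long_cycle_monomial: "long_cycle k = monomial_mat k (\<lambda>j. (j + 1) mod k) (\<lambda>_. 1)"
  by (rule eq_matI) (auto simp: long_cycle_def monomial_mat_index)

lemma long_cycle_Gdd:
  assumes "k \<ge> 1"
  shows "long_cycle k \<in> Gdd 1 k"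
proof -
  have "inj_on (\<lambda>j. (j + 1) mod k) {..<k}"
    by (rule inj_onI) (auto simp: mod_Suc split: if_splits)
  moreover have "(\<lambda>j. (j + 1) mod k) ` {..<k} \<subseteq> {..<k}" using assms by auto
  ultimately have "bij_betw (\<lambda>j. (j + 1) mod k) {..<k} {..<k}"
    using endo_inj_surj[of "{..<k}"] by (auto simp: bij_betw_def)
  then show ?thesis unfolding long_cycle_monomial by (intro monomial_mat_Gdd) auto
qed

lemma zeta_pow_eq_one: "d \<ge> 1 \<Longrightarrow> zeta d ^ d = 1"
  by (simp add: zeta_def DeMoivre)

lemma single_sim_cycle_emb:
  assumes "d \<ge> 1" "single_sim_cycle d n w k"
  obtains ks z where "cycle_embedding n k ks z d" "w = cycle_embedding.emb n k ks z (long_cycle k)"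
proof -
  obtain ks ts where w: "w \<in> Gdd d n" and k: "k \<ge> 1" "length ks = k" "length ts = k"
    and ks: "distinct ks" "set ks \<subseteq> {..<n}"
    and cyc: "\<forall>i<k. w *\<^sub>v (zeta d ^ (ts!i) \<cdot>\<^sub>v unit_vec n (ks!i))
              = zeta d ^ (ts!((i+1) mod k)) \<cdot>\<^sub>v unit_vec n (ks!((i+1) mod k))"
    and fixed: "\<forall>j<n. j \<notin> set ks \<longrightarrow> w *\<^sub>v unit_vec n j = unit_vec n j"
    using assms(2) unfolding single_sim_cycle_def by blast
  define z where "z i = zeta d ^ (ts ! i)" for i
  have "z i ^ d = 1" for i
    by (simp add: z_def power_mult[symmetric] mult.commute[of _ d] power_mult zeta_pow_eq_one[OF assms(1)])
  then interpret E: cycle_embedding n k ks z d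
    by unfold_locales (use k ks assms(1) in \<open>auto simp: z_def zeta_def\<close>)
  have wc: "w \<in> carrier_mat n n" using w Gdd_carrier by blast
  have "w *\<^sub>v unit_vec n j = E.emb (long_cycle k) *\<^sub>v unit_vec n j" if j: "j < n" for j
  proof (cases "j \<in> E.K")
    case True
    then obtain i where i: "i < k" "j = ks ! i" using k(2) by (auto simp: in_set_conv_nth)
    have "z i \<cdot>\<^sub>v (w *\<^sub>v unit_vec n j) = z i \<cdot>\<^sub>v (E.emb (long_cycle k) *\<^sub>v unit_vec n j)"
      using cyc i E.emb_long_cycle_mult_unit_vec[OF i(1)] mult_mat_vec[OF wc]
        mult_mat_vec[OF E.emb_carrier] by (simp add: z_def)
    then have "inverse (z i) \<cdot>\<^sub>v (z i \<cdot>\<^sub>v (w *\<^sub>v unit_vec n j))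
        = inverse (z i) \<cdot>\<^sub>v (z i \<cdot>\<^sub>v (E.emb (long_cycle k) *\<^sub>v unit_vec n j))" by simp
    then show ?thesis using E.z0[OF i(1)] by (simp add: smult_smult_assoc)
  qed (use j fixed E.emb_mult_unit_vec_outside in simp)
  then have "w = E.emb (long_cycle k)"
    by (intro mat_col_eqI) (use wc in \<open>auto simp: mult_unit_vec_eq_col[symmetric]\<close>)
  then show ?thesis using that E.cycle_embedding_axioms by blast
qed

theorem lemma3p2:
  fixes d n k :: nat and w :: "complex mat"
  assumes "d \<ge> 2" and "n \<ge> 2"
    and "parabolic_coxeter d n w"
    and "single_sim_cycle d n w k"
  shows "\<exists>f. bij_betw f (interval d n w) (NC_A k) \<and>
           (\<forall>u \<in> interval d n w. \<forall>v \<in> interval d n w.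
               absle d n u v \<longleftrightarrow> absle 1 k (f u) (f v))"
proof -
  obtain ks z where E: "cycle_embedding n k ks z d"
    and w: "w = cycle_embedding.emb n k ks z (long_cycle k)"
    using single_sim_cycle_emb[of d n w k] assms(1,4) by auto
  have "k \<ge> 1" using assms(4) by (simp add: single_sim_cycle_def)
  then show ?thesis
    using cycle_embedding.interval_emb_order_iso[OF E long_cycle_Gdd] w by (simp add: NC_A_def)
qed

end
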